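(* Let $\mathcal X=\{1,\dots,k\}$ and let $G$ be a generator matrix on $\mathcal X$ with no zero entries; let $\mu$ be its unique stochastic vector with $\mu^tG=0$. Let $M\in\mathbb N$ be such that $I+G/n$ is non-negative for $n>M$, $K_n=I+\frac Gn\mathbb 1(n>M)$, let $\mathbf T$ be the inhomogeneous Markov chain with kernels $\{K_n\}$ (from time $n$ to $n+1$), and let $\nu=\langle\nu_1,\dots,\nu_k\rangle$ be the distributional limit of $\langle\frac1n\sum_{j=1}^n\delta_{T_j}(i)\rangle_{i\in\mathcal X}$. Let $\tilde K_j=(I-G/j)^{-1}$ for $j\ge1$ and let $\mathbf Z$ be the inhomogeneous Markov chain with initial distribution $\mu$ and kernels $\{\tilde K_n\}_{n\ge1}$. Then $\tilde K_n=K_n+O(n^{-2})$, and $$\nu\overset d=\lim_{n\to\infty}\frac1n\Big\langle\sum_{j=1}^n\delta_{Z_j}(i)\Big\rangle_{i\in\mathcal X}.$$ Moreover, for $\mathbf m=(m_1,\dots,m_k)\in\mathbb N_0^k$ with $N=\sum_im_i>0$, $$\mathbb E\Big[\prod_{i=1}^k\nu_i^{m_i}\Big]=\binom{N}{m_1,\dots,m_k}^{-1}\mathbb P\Big(\sum_{j=1}^N\mathbb 1(Z_j=i)=m_i,\ 1\le i\le k\Big),$$ and in particular $\mathbb E[\nu_i^N]=\mathbb P(Z_1=\dots=Z_N=i)$.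
   Context: A generator matrix: $G_{i,j}\ge0$ for $i\ne j$ and $G_{i,i}=-\sum_{j\ne i}G_{i,j}$. For each $j\ge1$, $(I-G/j)^{-1}$ exists and is a stochastic matrix. The limit law $\nu$ does not depend on the initial distribution of $\mathbf T$. *)

theory Defs
  imports "HOL-Probability.Probability" "HOL-Library.Landau_Symbols"
begin

text \<open>States: a finite type 'a (playing the role of X = {1,..,k}, k = CARD('a)).
  Matrices are real^'a^'a; the row index is the current state.\<close>

definition generator_matrix :: "real^'a^'a \<Rightarrow> bool" where
  "generator_matrix G \<longleftrightarrow>
     (\<forall>i j. i \<noteq> j \<longrightarrow> G $ i $ j \<ge> 0) \<and>
     (\<forall>i. G $ i $ i = - (\<Sum>j\<in>UNIV - {i}. G $ i $ j))"

definition stochastic_vector :: "real^'a \<Rightarrow> bool" where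
  "stochastic_vector p \<longleftrightarrow> (\<forall>i. p $ i \<ge> 0) \<and> (\<Sum>i\<in>UNIV. p $ i) = 1"

text \<open>Probability that an inhomogeneous Markov chain with initial distribution p
  (law of X_1) and kernels K n (from time n to time n+1) has path
  (X_1,...,X_N) = xs, where N = length xs.\<close>

definition path_prob :: "real^'a \<Rightarrow> (nat \<Rightarrow> real^'a^'a) \<Rightarrow> 'a list \<Rightarrow> real" where
  "path_prob p K xs =
     (if xs = [] then 1
      else p $ hd xs * (\<Prod>j<length xs - 1. K (Suc j) $ (xs ! j) $ (xs ! Suc j)))"

definition occ :: "'a list \<Rightarrow> real^'a" where
  "occ xs = (\<chi> i. real (count_list xs i) / real (length xs))"

definition occ_expect :: "real^'a \<Rightarrow> (nat \<Rightarrow> real^'a^'a) \<Rightarrow> nat \<Rightarrow> (real^'a \<Rightarrow> real) \<Rightarrow> real" where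
  "occ_expect p K n f = (\<Sum>xs\<in>{xs. length xs = n}. path_prob p K xs * f (occ xs))"

text \<open>Convergence in distribution of the occupation vectors of the chain to the
  probability law nu on real^'a (tested against bounded continuous functions).\<close>

definition occ_converges_to :: "real^'a \<Rightarrow> (nat \<Rightarrow> real^'a^'a) \<Rightarrow> (real^'a) measure \<Rightarrow> bool" where
  "occ_converges_to p K \<nu> \<longleftrightarrow>
     (\<forall>f::real^'a \<Rightarrow> real. continuous_on UNIV f \<longrightarrow> bounded (range f) \<longrightarrow>
        (\<lambda>n. occ_expect p K n f) \<longlonglongrightarrow> (\<integral>x. f x \<partial>\<nu>))"

end

theory Submission
  imports Defs "HOL-Analysis.Harmonic_Numbers" "HOL-Real_Asymp.Real_Asymp"
begin

text \<open>The limit law is identified through its moments. For any chain whose kernels are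
  \<open>L\<^sub>n = I + G/n + O(n\<^sup>-\<^sup>2)\<close>, split the occupation moments \<open>E[\<Prod>\<^sub>i (n\<^sup>-\<^sup>1 #visits to i)\<^bsup>m\<^sub>i\<^esup>]\<close>
  according to the current state \<open>y\<close>. These satisfy a recursion in \<open>n\<close> whose limit equation is
  \<open>|m| W(m) - W(m) G = m\<^sub>y W(m - e\<^sub>y)\<close>, and by induction on \<open>|m|\<close> together with a Chung-type lemma
  for \<open>a\<^sub>n\<^sub>+\<^sub>1 \<le> (1 - c/n) a\<^sub>n + o(1/n)\<close> they converge to its solution. Because \<open>(I - G/N)\<^sup>-\<^sup>1\<close> is
  the kernel of the resolvent chain \<open>Z\<close>, that solution is
  \<open>W(m, y) = (\<Prod>\<^sub>i m\<^sub>i! / |m|!) P(Z\<^sub>1 \<dots> Z\<^sub>|\<^sub>m\<^sub>| visit each i exactly m\<^sub>i times, Z\<^sub>|\<^sub>m\<^sub>|\<^sub>+\<^sub>1 = y)\<close>.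
  Both the Euler chain \<open>T\<close> and \<open>Z\<close> are chains of this kind, so their occupation moments have
  the same limits; as occupation vectors live in the unit cube, Stone--Weierstrass upgrades
  convergence of moments to convergence in distribution.\<close>

section \<open>Generators and their resolvents\<close>

lemma generator_row_sum:
  assumes "generator_matrix G"
  shows "(\<Sum>j\<in>UNIV. G $ i $ j) = 0"
proof -
  have "(\<Sum>j\<in>UNIV. G $ i $ j) = G $ i $ i + (\<Sum>j\<in>UNIV - {i}. G $ i $ j)"
    by (simp add: sum.remove)
  then show ?thesis using assms unfolding generator_matrix_def by simp
qed

lemma generator_off_diagonal_nonneg: "generator_matrix G \<Longrightarrow> i \<noteq> j \<Longrightarrow> G $ i $ j \<ge> 0"
  unfolding generator_matrix_def by auto

lemma mat_1_component: "(mat 1 :: real^'a^'a) $ i $ j = (if i = j then 1 else 0)"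
  by (simp add: mat_def)

lemma stochastic_vectorD:
  assumes "stochastic_vector p"
  shows "p $ i \<ge> 0" and "(\<Sum>i\<in>UNIV. p $ i) = 1"
  using assms unfolding stochastic_vector_def by auto

definition stochastic_matrix :: "real^'a^'a \<Rightarrow> bool" where
  "stochastic_matrix A \<longleftrightarrow> (\<forall>i. stochastic_vector (A $ i))"

lemma stochastic_matrixD:
  assumes "stochastic_matrix A"
  shows "A $ i $ j \<ge> 0" and "(\<Sum>j\<in>UNIV. A $ i $ j) = 1" and "A $ i $ j \<le> 1"
proof -
  show nonneg: "A $ i $ j \<ge> 0" and sum: "(\<Sum>j\<in>UNIV. A $ i $ j) = 1"
    using assms unfolding stochastic_matrix_def stochastic_vector_def by auto
  have "A $ i $ j \<le> (\<Sum>j\<in>UNIV. A $ i $ j)"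
    using assms unfolding stochastic_matrix_def stochastic_vector_def by (intro member_le_sum) auto
  then show "A $ i $ j \<le> 1" using sum by simp
qed

text \<open>Minimum principle: at a coordinate \<open>i\<^sub>0\<close> where \<open>v\<close> is minimal, \<open>(G *v v) $ i\<^sub>0 \<ge> 0\<close>,
  so \<open>v $ i\<^sub>0 \<ge> ((mat 1 - t *\<^sub>R G) *v v) $ i\<^sub>0\<close>.\<close>

lemma nonneg_if_resolvent_image_nonneg:
  fixes G :: "real^'a^'a" and v :: "real^'a"
  assumes gen: "generator_matrix G" and t: "t \<ge> 0"
    and image_nonneg: "\<And>i. ((mat 1 - t *\<^sub>R G) *v v) $ i \<ge> 0"
  shows "v $ i \<ge> 0"
proof -
  define vmin where "vmin = Min (range (\<lambda>i. v $ i))"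
  have "vmin \<in> range (\<lambda>i. v $ i)" unfolding vmin_def by (intro Min_in) auto
  then obtain i0 where i0: "v $ i0 = vmin" by auto
  have vmin_le: "\<And>j. vmin \<le> v $ j" unfolding vmin_def by (intro Min_le) auto
  have "((mat 1 - t *\<^sub>R G) *v v) $ i0
      = (\<Sum>j\<in>UNIV. (if i0 = j then v $ j else 0) - t * (G $ i0 $ j * v $ j))"
    unfolding matrix_vector_mult_def vec_lambda_beta by (intro sum.cong) (auto simp: mat_1_component algebra_simps)
  then have image: "((mat 1 - t *\<^sub>R G) *v v) $ i0 = v $ i0 - t * (\<Sum>j\<in>UNIV. G $ i0 $ j * v $ j)"
    by (simp add: sum_subtractf sum_distrib_left)
  have "(\<Sum>j\<in>UNIV. G $ i0 $ j * v $ j) = (\<Sum>j\<in>UNIV. G $ i0 $ j * (v $ j - v $ i0))"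
    using generator_row_sum[OF gen, of i0]
    by (simp add: right_diff_distrib sum_subtractf sum_distrib_right[symmetric])
  also have "\<dots> \<ge> 0"
  proof (intro sum_nonneg)
    fix j
    show "0 \<le> G $ i0 $ j * (v $ j - v $ i0)"
      using generator_off_diagonal_nonneg[OF gen, of i0 j] vmin_le[of j] i0
      by (cases "j = i0") auto
  qed
  finally have "v $ i0 \<ge> ((mat 1 - t *\<^sub>R G) *v v) $ i0"
    using image t by simp
  then show ?thesis using image_nonneg[of i0] vmin_le[of i] i0 by linarith
qed

lemma matrix_diff_ldistrib: "(A::real^'n^'m) ** (B - C) = A ** B - A ** C"
  by (vector matrix_matrix_mult_def sum_subtractf algebra_simps)

lemma matrix_add_rdistrib: "((B::real^'n^'m) + C) ** A = B ** A + C ** A"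
  by (vector matrix_matrix_mult_def sum.distrib algebra_simps)

lemma invertible_resolvent_matrix:
  fixes G :: "real^'a^'a"
  assumes gen: "generator_matrix G" and t: "t \<ge> 0"
  shows "invertible (mat 1 - t *\<^sub>R G)"
proof -
  have "x = 0" if h: "(mat 1 - t *\<^sub>R G) *v x = 0" for x :: "real^'a"
  proof -
    have h': "(mat 1 - t *\<^sub>R G) *v (- x) = 0"
      using h by (metis add.inverse_neutral matrix_vector_mult_diff_distrib diff_0 diff_self)
    have "x $ i \<ge> 0" "(- x) $ i \<ge> 0" for i
      by (rule nonneg_if_resolvent_image_nonneg[OF gen t], simp add: h h')+
    then show "x = 0" by (simp add: vec_eq_iff) (meson antisym neg_0_le_iff_le)
  qed
  then show ?thesis using matrix_left_invertible_ker invertible_left_inverse by blast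
qed

definition resolvent :: "real^'a^'a \<Rightarrow> real \<Rightarrow> real^'a^'a" where
  "resolvent G t = matrix_inv (mat 1 - t *\<^sub>R G)"

lemma resolvent_inverse:
  assumes "generator_matrix G" and "t \<ge> 0"
  shows "resolvent G t ** (mat 1 - t *\<^sub>R G) = mat 1"
    and "(mat 1 - t *\<^sub>R G) ** resolvent G t = mat 1"
  using someI_ex[OF invertible_resolvent_matrix[OF assms, unfolded invertible_def]]
  unfolding resolvent_def matrix_inv_def by auto

lemma stochastic_matrix_resolvent:
  assumes gen: "generator_matrix G" and t: "t \<ge> 0"
  shows "stochastic_matrix (resolvent G t)"
proof -
  let ?A = "mat 1 - t *\<^sub>R G" and ?B = "resolvent G t"
  have nonneg: "?B $ i $ j \<ge> 0" for i j
  proof -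
    have image: "?A *v (?B *v axis j 1) = axis j 1"
      by (simp add: matrix_vector_mul_assoc resolvent_inverse(2)[OF gen t])
    have "(?B *v axis j 1) $ i \<ge> 0"
      by (rule nonneg_if_resolvent_image_nonneg[OF gen t]) (subst image, simp add: axis_def)
    then show ?thesis by (simp add: matrix_vector_mult_def axis_def if_distrib cong: if_cong)
  qed
  have "G *v vec 1 = 0"
    using generator_row_sum[OF gen] by (simp add: vec_eq_iff matrix_vector_mult_def)
  then have "?A *v vec 1 = vec 1"
    by (simp add: matrix_vector_mult_diff_rdistrib scaleR_matrix_vector_assoc[symmetric])
  then have "?B *v vec 1 = vec 1"
    by (metis resolvent_inverse(1)[OF gen t] matrix_vector_mul_assoc matrix_vector_mul_lid)
  then have "(\<Sum>j\<in>UNIV. ?B $ i $ j) = 1" for i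
    by (simp add: vec_eq_iff matrix_vector_mult_def)
  with nonneg show ?thesis unfolding stochastic_matrix_def stochastic_vector_def by simp
qed

lemma resolvent_expansion:
  assumes "generator_matrix G" and "t \<ge> 0"
  shows "resolvent G t = mat 1 + t *\<^sub>R G + t\<^sup>2 *\<^sub>R (resolvent G t ** (G ** G))"
proof -
  let ?B = "resolvent G t"
  have "?B ** (mat 1 - t *\<^sub>R G) = ?B - t *\<^sub>R (?B ** G)"
    by (simp add: matrix_diff_ldistrib matrix_scalar_ac scalar_matrix_assoc)
  then have first_order: "?B = mat 1 + t *\<^sub>R (?B ** G)"
    using resolvent_inverse(1)[OF assms] by (simp add: algebra_simps)
  have "?B ** G = G + t *\<^sub>R (?B ** (G ** G))"
    by (subst first_order)
      (simp add: matrix_add_rdistrib scalar_matrix_assoc[symmetric] matrix_mul_assoc)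
  then show ?thesis
    by (subst first_order) (simp add: algebra_simps power2_eq_square)
qed

definition resolvent_kernel :: "real^'a^'a \<Rightarrow> nat \<Rightarrow> real^'a^'a" where
  "resolvent_kernel G n = resolvent G (1 / real n)"

lemma stochastic_matrix_resolvent_kernel:
  "generator_matrix G \<Longrightarrow> stochastic_matrix (resolvent_kernel G n)"
  unfolding resolvent_kernel_def by (rule stochastic_matrix_resolvent) simp_all

definition Euler_kernel :: "real^'a^'a \<Rightarrow> nat \<Rightarrow> nat \<Rightarrow> real^'a^'a" where
  "Euler_kernel G M n = (if n > M then mat 1 + (1 / real n) *\<^sub>R G else mat 1)"

lemma resolvent_kernel_approx:
  assumes gen: "generator_matrix G"
  shows "\<bar>resolvent_kernel G n $ i $ j - ((if i = j then 1 else 0) + G $ i $ j / real n)\<bar>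
     \<le> (\<Sum>k\<in>UNIV. \<Sum>l\<in>UNIV. \<bar>(G ** G) $ k $ l\<bar>) / (real n)\<^sup>2"
proof -
  let ?B = "resolvent_kernel G n" and ?GG = "G ** G"

  have "?B $ i $ j = (if i = j then 1 else 0) + G $ i $ j / real n + (1 / real n)\<^sup>2 * (?B ** ?GG) $ i $ j"
    unfolding resolvent_kernel_def
    by (subst resolvent_expansion[OF gen]) (simp_all add: mat_1_component)
  then have error: "\<bar>?B $ i $ j - ((if i = j then 1 else 0) + G $ i $ j / real n)\<bar>
      = (1 / real n)\<^sup>2 * \<bar>(?B ** ?GG) $ i $ j\<bar>"
    by (simp add: abs_mult)
  have "\<bar>(?B ** ?GG) $ i $ j\<bar> \<le> (\<Sum>k\<in>UNIV. \<bar>?B $ i $ k * ?GG $ k $ j\<bar>)"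
    unfolding matrix_matrix_mult_def by (simp add: sum_abs)
  also have "\<dots> \<le> (\<Sum>k\<in>UNIV. \<bar>?GG $ k $ j\<bar>)"
    using stochastic_matrixD[OF stochastic_matrix_resolvent_kernel[OF gen]]
    by (intro sum_mono) (simp add: abs_mult mult_left_le_one_le)
  also have "\<dots> \<le> (\<Sum>k\<in>UNIV. \<Sum>l\<in>UNIV. \<bar>?GG $ k $ l\<bar>)"
    by (intro sum_mono member_le_sum) auto
  finally show ?thesis
    unfolding error by (simp add: power_divide divide_right_mono)
qed

lemma Euler_kernel_component:
  "Euler_kernel G M n $ i $ j = (if i = j then 1 else 0) + (if n > M then G $ i $ j / real n else 0)"
  by (simp add: Euler_kernel_def mat_1_component)

lemma stochastic_matrix_Euler_kernel:
  assumes gen: "generator_matrix G"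
    and nonneg: "\<forall>n>M. \<forall>i j. (mat 1 + (1 / real n) *\<^sub>R G) $ i $ j \<ge> 0"
  shows "stochastic_matrix (Euler_kernel G M n)"
proof -
  have "Euler_kernel G M n $ i $ j \<ge> 0" for i j
    using nonneg by (auto simp: Euler_kernel_def mat_1_component)
  moreover have "(\<Sum>j\<in>UNIV. Euler_kernel G M n $ i $ j) = 1" for i
    using generator_row_sum[OF gen, of i]
    by (cases "n > M") (simp_all add: Euler_kernel_component sum.distrib sum_divide_distrib[symmetric])
  ultimately show ?thesis unfolding stochastic_matrix_def stochastic_vector_def by simp
qed

lemma resolvent_kernel_minus_Euler_kernel_bigo:
  assumes gen: "generator_matrix G"
  shows "(\<lambda>n. resolvent_kernel G n $ i $ j - Euler_kernel G M n $ i $ j) \<in> O(\<lambda>n. 1 / (real n)\<^sup>2)"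
proof (rule bigoI)
  let ?C = "\<Sum>k\<in>UNIV. \<Sum>l\<in>UNIV. \<bar>(G ** G) $ k $ l\<bar>"
  show "eventually (\<lambda>n. norm (resolvent_kernel G n $ i $ j - Euler_kernel G M n $ i $ j)
      \<le> ?C * norm (1 / (real n)\<^sup>2)) at_top"
    unfolding eventually_at_top_linorder
    using resolvent_kernel_approx[OF gen, of _ i j] by (intro exI[of _ "Suc M"]) (auto simp: Euler_kernel_component)
qed

section \<open>Paths, occupation counts and their moments\<close>

definition monomial :: "('a \<Rightarrow> nat) \<Rightarrow> real^'a \<Rightarrow> real" where
  "monomial m x = (\<Prod>i\<in>UNIV. (x $ i) ^ m i)"

definition total_degree :: "('a::finite \<Rightarrow> nat) \<Rightarrow> nat" where
  "total_degree m = (\<Sum>i\<in>UNIV. m i)"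

definition lists_with_counts :: "('a::finite \<Rightarrow> nat) \<Rightarrow> 'a list set" where
  "lists_with_counts m = {xs. length xs = total_degree m \<and> (\<forall>i. count_list xs i = m i)}"

lemma finite_lists_length: "finite {xs::'a::finite list. length xs = n}"
  using finite_lists_length_eq[of "UNIV::'a set" n] by simp

lemma finite_lists_with_counts: "finite (lists_with_counts m)"
  unfolding lists_with_counts_def by (rule finite_subset[OF _ finite_lists_length]) auto

lemma path_prob_singleton: "path_prob p L [y] = p $ y"
  by (simp add: path_prob_def)

lemma path_prob_snoc:
  assumes "xs \<noteq> []"
  shows "path_prob p L (xs @ [y]) = path_prob p L xs * L (length xs) $ last xs $ y"
proof -
  obtain l where l: "length xs = Suc l" using assms by (cases xs) auto
  have "(\<Prod>j<l. L (Suc j) $ ((xs @ [y]) ! j) $ ((xs @ [y]) ! Suc j))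
      = (\<Prod>j<length xs - 1. L (Suc j) $ (xs ! j) $ (xs ! Suc j))"
    using l by (intro prod.cong) (auto simp: nth_append)
  moreover have "L (Suc l) $ ((xs @ [y]) ! l) $ ((xs @ [y]) ! Suc l) = L (length xs) $ last xs $ y"
    using l assms by (simp add: nth_append last_conv_nth)
  ultimately show ?thesis using assms l by (simp add: path_prob_def)
qed

lemma path_prob_nonneg:
  assumes "stochastic_vector p" and "\<And>n. stochastic_matrix (L n)"
  shows "path_prob p L xs \<ge> 0"
  unfolding path_prob_def
  using stochastic_vectorD(1)[OF assms(1)] stochastic_matrixD(1)[OF assms(2)]
  by (auto intro!: prod_nonneg mult_nonneg_nonneg)

lemma sum_lists_last_snoc:
  "(\<Sum>xs\<in>{xs::'a::finite list. length xs = Suc (Suc n) \<and> last xs = y}. f xs)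
     = (\<Sum>xs\<in>{xs. length xs = Suc n}. f (xs @ [y]))"
proof -
  have "{xs::'a list. length xs = Suc (Suc n) \<and> last xs = y} = (\<lambda>xs. xs @ [y]) ` {xs. length xs = Suc n}"
  proof (intro set_eqI iffI)
    fix zs :: "'a list" assume "zs \<in> {xs. length xs = Suc (Suc n) \<and> last xs = y}"
    then have z: "length zs = Suc (Suc n)" "last zs = y" by auto
    then have "zs = butlast zs @ [y]" by (metis append_butlast_last_id list.size(3) nat.distinct(1))
    moreover have "length (butlast zs) = Suc n" using z by simp
    ultimately show "zs \<in> (\<lambda>xs. xs @ [y]) ` {xs. length xs = Suc n}" by blast
  qed auto
  moreover have "inj_on (\<lambda>xs. xs @ [y]) {xs::'a list. length xs = Suc n}" by (auto simp: inj_on_def)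
  ultimately show ?thesis by (simp add: sum.reindex)
qed

lemma sum_lists_group_last:
  "(\<Sum>xs\<in>{xs::'a::finite list. length xs = Suc n}. g xs)
     = (\<Sum>x\<in>UNIV. \<Sum>xs\<in>{xs. length xs = Suc n \<and> last xs = x}. g xs)"
  using sum.group[of "{xs::'a list. length xs = Suc n}" UNIV last g] by (simp add: finite_lists_length)

lemma sum_path_prob:
  assumes "stochastic_vector p" and "\<And>n. stochastic_matrix (L n)"
  shows "(\<Sum>xs\<in>{xs. length xs = n}. path_prob p L xs) = 1"
proof (cases n)
  case 0
  then have "{xs::'a list. length xs = n} = {[]}" by auto
  then show ?thesis by (simp add: path_prob_def)
next
  case (Suc k)
  have "(\<Sum>xs\<in>{xs. length xs = Suc k}. path_prob p L xs) = 1"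
  proof (induction k)
    case 0
    have "{xs::'a list. length xs = Suc 0} = (\<lambda>y. [y]) ` UNIV" by (auto simp: length_Suc_conv)
    then show ?case
      by (simp add: sum.reindex inj_on_def path_prob_singleton stochastic_vectorD(2)[OF assms(1)])
  next
    case (Suc k)
    have "(\<Sum>xs\<in>{xs. length xs = Suc (Suc k)}. path_prob p L xs)
        = (\<Sum>y\<in>UNIV. \<Sum>xs\<in>{xs. length xs = Suc k}. path_prob p L (xs @ [y]))"
      by (simp only: sum_lists_group_last[of _ "Suc k"] sum_lists_last_snoc)
    also have "\<dots> = (\<Sum>xs\<in>{xs. length xs = Suc k}. \<Sum>y\<in>UNIV. path_prob p L (xs @ [y]))"
      by (rule sum.swap)
    also have "\<dots> = (\<Sum>xs\<in>{xs. length xs = Suc k}. path_prob p L xs)"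
    proof (intro sum.cong refl)
      fix xs :: "'a list" assume "xs \<in> {xs. length xs = Suc k}"
      then have "xs \<noteq> []" by auto
      then show "(\<Sum>y\<in>UNIV. path_prob p L (xs @ [y])) = path_prob p L xs"
        by (simp add: path_prob_snoc sum_distrib_left[symmetric] stochastic_matrixD(2)[OF assms(2)])
    qed
    finally show ?case using Suc by simp
  qed
  then show ?thesis using Suc by simp
qed

definition end_moment :: "real^'a \<Rightarrow> (nat \<Rightarrow> real^'a^'a) \<Rightarrow> nat \<Rightarrow> ('a \<Rightarrow> nat) \<Rightarrow> 'a \<Rightarrow> real" where
  "end_moment p L n m y = (\<Sum>xs\<in>{xs. length xs = Suc n \<and> last xs = y}.
       path_prob p L xs * (\<Prod>i\<in>UNIV. real (count_list xs i) ^ m i))"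

lemma prod_power_shift_binomial:
  fixes c :: "'a::finite \<Rightarrow> real"
  shows "(\<Prod>i\<in>UNIV. (c i + (if i = y then 1 else 0)) ^ m i)
       = (\<Sum>r\<le>m y. real (m y choose r) * (\<Prod>i\<in>UNIV. c i ^ (m(y := r)) i))"
proof -
  define P where "P = (\<Prod>i\<in>UNIV - {y}. c i ^ m i)"
  have "(\<Prod>i\<in>UNIV - {y}. (c i + (if i = y then 1 else 0)) ^ m i) = P"
    unfolding P_def by (intro prod.cong) auto
  then have lhs: "(\<Prod>i\<in>UNIV. (c i + (if i = y then 1 else 0)) ^ m i) = (c y + 1) ^ m y * P"
    by (simp add: prod.remove[of UNIV y])
  have "(\<Prod>i\<in>UNIV - {y}. c i ^ (m(y := r)) i) = P" for r
    unfolding P_def by (intro prod.cong) auto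
  then have rhs: "(\<Prod>i\<in>UNIV. c i ^ (m(y := r)) i) = c y ^ r * P" for r
    by (simp add: prod.remove[of UNIV y])
  have "(c y + 1) ^ m y = (\<Sum>r\<le>m y. real (m y choose r) * c y ^ r)"
    by (simp add: binomial_ring)
  then show ?thesis unfolding lhs rhs by (simp add: sum_distrib_right mult.assoc)
qed

lemma end_moment_Suc:
  "end_moment p L (Suc n) m y = (\<Sum>r\<le>m y. real (m y choose r) *
       (\<Sum>x\<in>UNIV. end_moment p L n (m(y := r)) x * L (Suc n) $ x $ y))"
proof -
  have step: "path_prob p L (xs @ [y]) * (\<Prod>i\<in>UNIV. real (count_list (xs @ [y]) i) ^ m i)
      = (\<Sum>r\<le>m y. real (m y choose r) *
          (path_prob p L xs * (\<Prod>i\<in>UNIV. real (count_list xs i) ^ (m(y := r)) i) * L (Suc n) $ last xs $ y))"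
    if "length xs = Suc n" for xs :: "'a list"
  proof -
    have count: "real (count_list (xs @ [y]) i) = real (count_list xs i) + (if i = y then 1 else 0)" for i
      by auto
    have "xs \<noteq> []" using that by auto
    then show ?thesis
      unfolding path_prob_snoc[OF \<open>xs \<noteq> []\<close>] count prod_power_shift_binomial that
      by (simp add: sum_distrib_left sum_distrib_right mult_ac)
  qed
  have "end_moment p L (Suc n) m y = (\<Sum>xs\<in>{xs. length xs = Suc n}. \<Sum>r\<le>m y. real (m y choose r) *
          (path_prob p L xs * (\<Prod>i\<in>UNIV. real (count_list xs i) ^ (m(y := r)) i) * L (Suc n) $ last xs $ y))"
    unfolding end_moment_def sum_lists_last_snoc by (intro sum.cong refl step) simp
  also have "\<dots> = (\<Sum>r\<le>m y. real (m y choose r) * (\<Sum>xs\<in>{xs. length xs = Suc n}.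
          path_prob p L xs * (\<Prod>i\<in>UNIV. real (count_list xs i) ^ (m(y := r)) i) * L (Suc n) $ last xs $ y))"
    by (subst sum.swap) (simp add: sum_distrib_left)
  also have "\<dots> = (\<Sum>r\<le>m y. real (m y choose r) * (\<Sum>x\<in>UNIV. end_moment p L n (m(y := r)) x * L (Suc n) $ x $ y))"
    unfolding sum_lists_group_last end_moment_def
    by (intro sum.cong refl arg_cong2[where f="(*)"]) (auto simp: sum_distrib_right)
  finally show ?thesis .
qed

lemma occ_expect_monomial:
  "occ_expect p L (Suc n) (monomial m) = (\<Sum>y\<in>UNIV. end_moment p L n m y) / real (Suc n) ^ total_degree m"
proof -
  have "monomial m (occ xs) = (\<Prod>i\<in>UNIV. real (count_list xs i) ^ m i) / real (Suc n) ^ total_degree m"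
    if "length xs = Suc n" for xs :: "'a list"
    using that
    by (simp add: monomial_def occ_def power_divide prod_dividef total_degree_def power_sum)
  then have "occ_expect p L (Suc n) (monomial m) = (\<Sum>xs\<in>{xs. length xs = Suc n}.
      path_prob p L xs * (\<Prod>i\<in>UNIV. real (count_list xs i) ^ m i) / real (Suc n) ^ total_degree m)"
    unfolding occ_expect_def by (intro sum.cong refl) simp
  also have "\<dots> = (\<Sum>y\<in>UNIV. end_moment p L n m y) / real (Suc n) ^ total_degree m"
    unfolding sum_divide_distrib[symmetric] sum_lists_group_last end_moment_def by simp
  finally show ?thesis .
qed

lemma total_degree_update: "total_degree (m(y := r)) + m y = total_degree m + r"
proof -
  have "(\<Sum>i\<in>UNIV - {y}. (m(y := r)) i) = (\<Sum>i\<in>UNIV - {y}. m i)" by (intro sum.cong) auto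
  then show ?thesis unfolding total_degree_def by (simp add: sum.remove[of UNIV y])
qed

lemma total_degree_decrement:
  assumes "m x > 0"
  shows "total_degree m = Suc (total_degree (m(x := m x - 1)))"
  using total_degree_update[of m x "m x - 1"] assms by simp

lemma lists_with_counts_0: "total_degree m = 0 \<Longrightarrow> lists_with_counts m = {[]}"
  unfolding lists_with_counts_def total_degree_def by auto

lemma lists_with_counts_last:
  assumes "m x > 0"
  shows "{w \<in> lists_with_counts m. last w = x} = (\<lambda>w. w @ [x]) ` lists_with_counts (m(x := m x - 1))"
proof (intro set_eqI iffI)
  fix w assume "w \<in> {w \<in> lists_with_counts m. last w = x}"
  then have w: "length w = total_degree m" "\<forall>i. count_list w i = m i" "last w = x"
    unfolding lists_with_counts_def by auto
  have "w \<noteq> []" using w(1) total_degree_decrement[of m x, OF assms] by auto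
  then have w_snoc: "w = butlast w @ [x]" using w(3) by (metis append_butlast_last_id)
  have "count_list (butlast w) i = (m(x := m x - 1)) i" for i
    using w(2) arg_cong[OF w_snoc, of "\<lambda>w. count_list w i"] by auto
  moreover have "length (butlast w) = total_degree (m(x := m x - 1))"
    using w(1) total_degree_decrement[of m x, OF assms] by simp
  ultimately have "butlast w \<in> lists_with_counts (m(x := m x - 1))"
    unfolding lists_with_counts_def by simp
  then show "w \<in> (\<lambda>w. w @ [x]) ` lists_with_counts (m(x := m x - 1))"
    by (rule image_eqI[where f="\<lambda>w. w @ [x]", OF w_snoc])
next
  fix w assume "w \<in> (\<lambda>w. w @ [x]) ` lists_with_counts (m(x := m x - 1))"
  then obtain v where v: "w = v @ [x]" "length v = total_degree (m(x := m x - 1))"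
      "\<forall>i. count_list v i = (m(x := m x - 1)) i"
    unfolding lists_with_counts_def by auto
  have "count_list w i = m i" for i
    using v(1,3) assms by (cases "i = x") auto
  moreover have "length w = total_degree m"
    using v(1,2) total_degree_decrement[of m x, OF assms] by simp
  ultimately show "w \<in> {w \<in> lists_with_counts m. last w = x}"
    unfolding lists_with_counts_def using v(1) by simp
qed

lemma lists_with_counts_last_empty:
  assumes "m x = 0"
  shows "{w \<in> lists_with_counts m. last w = x} \<subseteq> {[]}"
proof
  fix w assume w: "w \<in> {w \<in> lists_with_counts m. last w = x}"
  show "w \<in> {[]}"
  proof (rule ccontr)
    assume "w \<notin> {[]}"
    then have "x \<in> set w" using w by auto
    then show False using w assms count_list_0_iff[of w x] by (auto simp: lists_with_counts_def)
  qed
qed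

lemma total_degree_single: "total_degree (\<lambda>j. if j = i then N else 0) = N"
  by (simp add: total_degree_def)

lemma prod_fact_single: "(\<Prod>j\<in>UNIV. fact (if j = i then N else 0) :: real) = fact N"
  for i :: "'a::finite"
  by (subst prod.remove[of UNIV i]) (auto intro: prod.neutral)

lemma lists_with_counts_single:
  "lists_with_counts (\<lambda>j. if j = i then N else 0) = {replicate N i}"
proof -
  note total_degree_single[of i N]
  moreover have "xs = replicate N i"
    if "length xs = N" "\<forall>j. count_list xs j = (if j = i then N else 0)" for xs :: "'a list"
    using that by (metis count_list_0_iff replicate_length_same)
  moreover have "count_list (replicate N i) j = (if j = i then N else 0)" for j
    by (induction N) auto
  ultimately show ?thesis unfolding lists_with_counts_def by auto
qed

lemma prod_fact_decrement:
  fixes m :: "'a::finite \<Rightarrow> nat"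
  assumes "m x > 0"
  shows "(\<Prod>i\<in>UNIV. fact (m i) :: real) = real (m x) * (\<Prod>i\<in>UNIV. fact ((m(x := m x - 1)) i))"
proof -
  have "(\<Prod>i\<in>UNIV - {x}. fact ((m(x := m x - 1)) i) :: real) = (\<Prod>i\<in>UNIV - {x}. fact (m i))"
    by (intro prod.cong) auto
  moreover have "fact (m x) = (real (m x) * fact (m x - 1) :: real)"
    using assms by (rule fact_reduce)
  ultimately show ?thesis by (simp add: prod.remove[of UNIV x])
qed

definition limit_end_moment :: "real^'a \<Rightarrow> (nat \<Rightarrow> real^'a^'a) \<Rightarrow> ('a \<Rightarrow> nat) \<Rightarrow> 'a \<Rightarrow> real" where
  "limit_end_moment p K m y = (\<Prod>i\<in>UNIV. fact (m i)) / fact (total_degree m) *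
     (\<Sum>w\<in>lists_with_counts m. path_prob p K (w @ [y]))"

lemma limit_end_moment_0: "total_degree m = 0 \<Longrightarrow> limit_end_moment p K m y = p $ y"
  by (simp add: limit_end_moment_def lists_with_counts_0 path_prob_singleton)
    (simp add: total_degree_def)

lemma limit_end_moment_rec:
  assumes N: "total_degree m > 0"
  shows "limit_end_moment p K m y = (\<Sum>x\<in>UNIV. real (m x) / real (total_degree m) *
           limit_end_moment p K (m(x := m x - 1)) x * K (total_degree m) $ x $ y)"
proof -
  let ?c = "(\<Prod>i\<in>UNIV. fact (m i)) / fact (total_degree m) :: real"
  have by_last: "?c * (\<Sum>w\<in>{w \<in> lists_with_counts m. last w = x}. path_prob p K (w @ [y]))
      = real (m x) / real (total_degree m) * limit_end_moment p K (m(x := m x - 1)) x * K (total_degree m) $ x $ y"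
    for x
  proof (cases "m x = 0")
    case True
    have "{w \<in> lists_with_counts m. last w = x} = {}"
      using lists_with_counts_last_empty[of m x, OF True] N
      by (auto simp: lists_with_counts_def)
    then show ?thesis using True by (simp only: sum.empty)
  next
    case False
    then have mx: "m x > 0" by simp
    let ?m' = "m(x := m x - 1)"
    have "(\<Sum>w\<in>{w \<in> lists_with_counts m. last w = x}. path_prob p K (w @ [y]))
        = (\<Sum>w\<in>lists_with_counts ?m'. path_prob p K ((w @ [x]) @ [y]))"
      unfolding lists_with_counts_last[of m x, OF mx] by (subst sum.reindex) (auto simp: inj_on_def)
    also have "\<dots> = (\<Sum>w\<in>lists_with_counts ?m'. path_prob p K (w @ [x])) * K (total_degree m) $ x $ y"
      unfolding sum_distrib_right
    proof (intro sum.cong refl)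
      fix w assume "w \<in> lists_with_counts ?m'"
      then have "length (w @ [x]) = total_degree m"
        by (simp add: lists_with_counts_def total_degree_decrement[of m x, OF mx])
      then show "path_prob p K ((w @ [x]) @ [y]) = path_prob p K (w @ [x]) * K (total_degree m) $ x $ y"
        by (subst path_prob_snoc) simp_all
    qed
    finally show ?thesis
      unfolding limit_end_moment_def prod_fact_decrement[of m x, OF mx] total_degree_decrement[of m x, OF mx]
      by simp
  qed
  have "limit_end_moment p K m y
      = (\<Sum>x\<in>UNIV. ?c * (\<Sum>w\<in>{w \<in> lists_with_counts m. last w = x}. path_prob p K (w @ [y])))"
    unfolding limit_end_moment_def sum_distrib_left[symmetric]
    by (simp add: sum.group finite_lists_with_counts)
  then show ?thesis unfolding by_last .
qed

text \<open>Because \<open>K N\<close> inverts \<open>I - G/N\<close>, the recursion becomes the limit equation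
  \<open>N W(m) - W(m) G = m\<^sub>z W(m - e\<^sub>z)\<close> at the final state \<open>z\<close>.\<close>

lemma limit_end_moment_generator_eq:
  fixes G :: "real^'a^'a"
  assumes N: "total_degree m > 0"
    and inverse: "K (total_degree m) ** (mat 1 - (1 / real (total_degree m)) *\<^sub>R G) = mat 1"
  shows "real (total_degree m) * limit_end_moment p K m z - (\<Sum>y\<in>UNIV. limit_end_moment p K m y * G $ y $ z)
       = real (m z) * limit_end_moment p K (m(z := m z - 1)) z"
proof -
  let ?N = "total_degree m" and ?W = "limit_end_moment p K m"
  define v where "v x = real (m x) / real ?N * limit_end_moment p K (m(x := m x - 1)) x" for x
  have W_rec: "?W y = (\<Sum>x\<in>UNIV. v x * K ?N $ x $ y)" for y
    unfolding limit_end_moment_rec[OF N, of p K] v_def ..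
  have inverse_column: "(\<Sum>y\<in>UNIV. K ?N $ x $ y * ((if y = z then 1 else 0) - G $ y $ z / real ?N))
      = (if x = z then 1 else 0)" for x
    using arg_cong[OF inverse, of "\<lambda>A. A $ x $ z"]
    by (simp add: matrix_matrix_mult_def mat_1_component)
  have "(\<Sum>y\<in>UNIV. ?W y * ((if y = z then 1 else 0) - G $ y $ z / real ?N))
      = (\<Sum>x\<in>UNIV. v x * (\<Sum>y\<in>UNIV. K ?N $ x $ y * ((if y = z then 1 else 0) - G $ y $ z / real ?N)))"
    unfolding W_rec sum_distrib_right sum_distrib_left by (subst sum.swap) (simp add: mult.assoc)
  also have "\<dots> = v z" unfolding inverse_column by (simp add: if_distrib cong: if_cong)
  finally have "(\<Sum>y\<in>UNIV. ?W y * ((if y = z then 1 else 0) - G $ y $ z / real ?N)) = v z" .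
  moreover have "(\<Sum>y\<in>UNIV. ?W y * ((if y = z then 1 else 0) - G $ y $ z / real ?N))
      = ?W z - (\<Sum>y\<in>UNIV. ?W y * G $ y $ z) / real ?N"
  proof -
    have "(\<Sum>y\<in>UNIV. ?W y * ((if y = z then 1 else 0) - G $ y $ z / real ?N))
        = (\<Sum>y\<in>UNIV. (if y = z then ?W y else 0) - ?W y * G $ y $ z / real ?N)"
      by (intro sum.cong) (auto simp: right_diff_distrib)
    then show ?thesis by (simp add: sum_subtractf sum_divide_distrib)
  qed
  ultimately show ?thesis using N unfolding v_def by (simp add: field_simps)
qed

lemma sum_limit_end_moment:
  assumes "\<And>n. stochastic_matrix (K n)" and "total_degree m > 0"
  shows "(\<Sum>y\<in>UNIV. limit_end_moment p K m y)
       = (\<Prod>i\<in>UNIV. fact (m i)) / fact (total_degree m) * (\<Sum>w\<in>lists_with_counts m. path_prob p K w)"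
proof -
  have "(\<Sum>y\<in>UNIV. path_prob p K (w @ [y])) = path_prob p K w" if "w \<in> lists_with_counts m" for w
  proof -
    have "w \<noteq> []" using that assms(2) unfolding lists_with_counts_def by auto
    then show ?thesis
      by (simp add: path_prob_snoc sum_distrib_left[symmetric] stochastic_matrixD(2)[OF assms(1)])
  qed
  then show ?thesis
    unfolding limit_end_moment_def sum_distrib_left[symmetric] by (subst sum.swap) simp
qed

section \<open>A Chung-type lemma and \<open>\<ell>\<^sup>1\<close> contraction of stochastic kernels\<close>

lemma no_harmonic_descent:
  fixes a :: "nat \<Rightarrow> real"
  assumes a_nonneg: "\<And>n. a n \<ge> 0" and d: "d > 0"
  shows "\<not> (\<forall>n\<ge>N. a (Suc n) \<le> a n - d / real (Suc n))"
proof
  assume descent: "\<forall>n\<ge>N. a (Suc n) \<le> a n - d / real (Suc n)"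
  have harmonic: "a (N + j) \<le> a N - d * (harm (N + j) - harm N)" for j
  proof (induction j)
    case (Suc j)
    have "a (N + Suc j) \<le> a N - d * (harm (N + j) - harm N) - d / real (Suc (N + j))"
      using descent Suc by (auto elim!: allE[of _ "N + j"])
    also have "\<dots> = a N - d * (harm (N + Suc j) - harm N)"
      by (simp add: harm_Suc field_simps)
    finally show ?case .
  qed simp
  define X where "X = a N / d + harm N + 1"
  define j where "j = nat \<lceil>exp X\<rceil>"
  have "exp X \<le> real (N + j) + 1" unfolding j_def by linarith
  then have "X \<le> ln (real (N + j) + 1)"
    by (metis exp_gt_zero exp_le_cancel_iff exp_ln order.strict_trans2)
  also have "\<dots> \<le> harm (N + j)" by (rule ln_le_harm)
  finally have "d * (a N / d + 1) \<le> d * (harm (N + j) - harm N)"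
    using d unfolding X_def by (intro mult_left_mono) auto
  then have "a (N + j) \<le> - d" using harmonic[of j] d by (simp add: distrib_left)
  then show False using a_nonneg[of "N + j"] d by linarith
qed

lemma contracting_recursion_eventually_below:
  fixes a :: "nat \<Rightarrow> real"
  assumes a_nonneg: "\<And>n. a n \<ge> 0" and c: "0 < c" "c \<le> 1" and r: "0 < r"
    and recursion: "\<And>n. n \<ge> N \<Longrightarrow> a (Suc n) \<le> (1 - c / real (Suc n)) * a n + c * r / (2 * real (Suc n))"
  shows "\<exists>N'. \<forall>n\<ge>N'. a n < r"
proof -
  have stay_below: "a (Suc n) < r" if "n \<ge> N" "a n < r" for n
  proof -
    have "0 \<le> 1 - c / real (Suc n)" using c by (simp add: field_simps)
    then have "(1 - c / real (Suc n)) * a n \<le> (1 - c / real (Suc n)) * r"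
      using that(2) by (intro mult_left_mono) auto
    moreover have "(1 - c / s) * r + c * r / (2 * s) = r - c * r / (2 * s)" if "s > 0" for s :: real
      using that by (simp add: field_simps)
    then have "(1 - c / real (Suc n)) * r + c * r / (2 * real (Suc n)) = r - c * r / (2 * real (Suc n))"
      by (metis of_nat_0_less_iff zero_less_Suc)
    moreover have "c * r / (2 * real (Suc n)) > 0" using c r by simp
    ultimately show ?thesis using recursion[OF that(1)] by linarith
  qed
  have "\<exists>n\<ge>N. a n < r"
  proof (rule ccontr)
    assume "\<not> ?thesis"
    then have above: "\<And>n. n \<ge> N \<Longrightarrow> a n \<ge> r" by force
    have "a (Suc n) \<le> a n - c * r / 2 / real (Suc n)" if "n \<ge> N" for n
    proof -
      have "c * r / real (Suc n) \<le> c * a n / real (Suc n)"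
        using above[OF that] c by (intro divide_right_mono mult_left_mono) auto
      moreover have "(1 - c / real (Suc n)) * a n = a n - c * a n / real (Suc n)"
        by (simp add: algebra_simps)
      moreover have "c * r / real (Suc n) = 2 * (c * r / 2 / real (Suc n))"
        and "c * r / (2 * real (Suc n)) = c * r / 2 / real (Suc n)" by (simp_all add: field_simps)
      ultimately show ?thesis using recursion[OF that] by argo
    qed
    then show False using no_harmonic_descent[of a "c * r / 2" N] a_nonneg c r by auto
  qed
  then obtain N' where N': "N' \<ge> N" "a N' < r" by blast
  have "a n < r" if "n \<ge> N'" for n
    using that
  proof (induction n rule: dec_induct)
    case (step n) then show ?case using stay_below[of n] N' by simp
  qed (use N' in simp)
  then show ?thesis by blast
qed

lemma contracting_recursion_tendsto_zero:
  fixes a b :: "nat \<Rightarrow> real"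
  assumes a_nonneg: "\<And>n. a n \<ge> 0" and c: "0 < c" "c \<le> 1"
    and recursion: "\<And>n. n \<ge> N \<Longrightarrow> a (Suc n) \<le> (1 - c / real (Suc n)) * a n + b n"
    and b: "(\<lambda>n. real (Suc n) * b n) \<longlonglongrightarrow> 0"
  shows "a \<longlonglongrightarrow> 0"
proof (rule LIMSEQ_I)
  fix r :: real assume r: "0 < r"
  obtain N0 where N0: "\<And>n. n \<ge> N0 \<Longrightarrow> \<bar>real (Suc n) * b n\<bar> < c * r / 2"
    using LIMSEQ_D[OF b, of "c * r / 2"] c r by auto
  have bound: "a (Suc n) \<le> (1 - c / real (Suc n)) * a n + c * r / (2 * real (Suc n))"
    if "n \<ge> max N0 N" for n
  proof -
    have "real (Suc n) * b n \<le> c * r / 2" using N0[of n] that by auto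
    then have "b n \<le> c * r / (2 * real (Suc n))" by (simp add: field_simps)
    then show ?thesis using recursion[of n] that by simp
  qed
  obtain N' where "\<forall>n\<ge>N'. a n < r"
    using contracting_recursion_eventually_below[OF a_nonneg c r bound] by blast
  then show "\<exists>N'. \<forall>n\<ge>N'. norm (a n - 0) < r" using a_nonneg by auto
qed

lemma l1_nonexpansive_stochastic:
  fixes P :: "'a::finite \<Rightarrow> 'a \<Rightarrow> real"
  assumes nonneg: "\<And>i j. P i j \<ge> 0" and row_sum: "\<And>i. (\<Sum>j\<in>UNIV. P i j) = 1"
  shows "(\<Sum>j\<in>UNIV. \<bar>\<Sum>i\<in>UNIV. z i * P i j\<bar>) \<le> (\<Sum>i\<in>UNIV. \<bar>z i\<bar>)"
proof -
  have "(\<Sum>j\<in>UNIV. \<bar>\<Sum>i\<in>UNIV. z i * P i j\<bar>) \<le> (\<Sum>j\<in>UNIV. \<Sum>i\<in>UNIV. \<bar>z i\<bar> * P i j)"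
    using nonneg by (intro sum_mono order.trans[OF sum_abs]) (simp add: abs_mult)
  also have "\<dots> = (\<Sum>i\<in>UNIV. \<bar>z i\<bar> * (\<Sum>j\<in>UNIV. P i j))"
    by (subst sum.swap) (simp add: sum_distrib_left)
  finally show ?thesis by (simp add: row_sum)
qed

text \<open>Doeblin's bound: a column bounded below by \<open>\<delta>\<close> contracts vectors of total mass zero,
  since subtracting \<open>\<delta>\<close> from that column does not change their image.\<close>

lemma l1_contraction_stochastic:
  fixes P :: "'a::finite \<Rightarrow> 'a \<Rightarrow> real"
  assumes nonneg: "\<And>i j. P i j \<ge> 0" and row_sum: "\<And>i. (\<Sum>j\<in>UNIV. P i j) = 1"
    and column: "\<And>i. P i j0 \<ge> \<delta>" and zero_mass: "(\<Sum>i\<in>UNIV. z i) = 0"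
  shows "(\<Sum>j\<in>UNIV. \<bar>\<Sum>i\<in>UNIV. z i * P i j\<bar>) \<le> (1 - \<delta>) * (\<Sum>i\<in>UNIV. \<bar>z i\<bar>)"
proof -
  define q where "q j = (if j = j0 then \<delta> else 0)" for j
  have q_le: "q j \<le> P i j" for i j using column nonneg unfolding q_def by auto
  have "(\<Sum>i\<in>UNIV. z i * P i j) = (\<Sum>i\<in>UNIV. z i * (P i j - q j))" for j
    using zero_mass by (simp add: right_diff_distrib sum_subtractf sum_distrib_right[symmetric])
  moreover have "\<bar>\<Sum>i\<in>UNIV. z i * (P i j - q j)\<bar> \<le> (\<Sum>i\<in>UNIV. \<bar>z i\<bar> * (P i j - q j))" for j
    using q_le by (intro order.trans[OF sum_abs]) (simp add: abs_mult)
  ultimately have "(\<Sum>j\<in>UNIV. \<bar>\<Sum>i\<in>UNIV. z i * P i j\<bar>) \<le> (\<Sum>j\<in>UNIV. \<Sum>i\<in>UNIV. \<bar>z i\<bar> * (P i j - q j))"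
    by (intro sum_mono) simp
  also have "\<dots> = (\<Sum>i\<in>UNIV. \<bar>z i\<bar> * (\<Sum>j\<in>UNIV. P i j - q j))"
    by (subst sum.swap) (simp add: sum_distrib_left)
  also have "\<dots> = (1 - \<delta>) * (\<Sum>i\<in>UNIV. \<bar>z i\<bar>)"
    by (simp add: sum_subtractf row_sum q_def sum_distrib_left mult.commute)
  finally show ?thesis .
qed

lemma tendsto_scaled_power_ratio:
  "(\<lambda>n. real (Suc n) * ((real (Suc n) / real (Suc (Suc n))) ^ N - 1)) \<longlonglongrightarrow> - real N"
proof -
  let ?q = "\<lambda>n. real (Suc n) / real (Suc (Suc n))"
  have "real (Suc n) * (?q n ^ N - 1) = - ?q n * (\<Sum>i<N. ?q n ^ i)" for n
  proof -
    have "real (Suc n) * (?q n - 1) = - ?q n" by (simp add: field_simps)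
    then show ?thesis unfolding power_diff_1_eq by (simp add: mult.assoc[symmetric])
  qed
  moreover have "?q \<longlonglongrightarrow> 1" by real_asymp
  then have "(\<lambda>n. - ?q n * (\<Sum>i<N. ?q n ^ i)) \<longlonglongrightarrow> - 1 * (\<Sum>i<N. 1 ^ i)"
    by (intro tendsto_intros)
  ultimately show ?thesis by simp
qed

lemma tendsto_scaled_power_quotient:
  assumes "k < l"
  shows "(\<lambda>n. real (Suc n) * real (Suc n) ^ k / real (Suc (Suc n)) ^ l) \<longlonglongrightarrow> (if l = Suc k then 1 else 0)"
proof -
  obtain e where l: "l = Suc k + e" using assms by (metis less_iff_Suc_add add_Suc)
  have "real (Suc n) * real (Suc n) ^ k / real (Suc (Suc n)) ^ l
      = (real (Suc n) / real (Suc (Suc n))) ^ Suc k * (1 / real (Suc (Suc n))) ^ e" for n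
    unfolding l by (simp add: power_add power_divide)
  moreover have "(\<lambda>n. real (Suc n) / real (Suc (Suc n))) \<longlonglongrightarrow> 1"
    and "(\<lambda>n. 1 / real (Suc (Suc n))) \<longlonglongrightarrow> 0" by real_asymp+
  then have "(\<lambda>n. (real (Suc n) / real (Suc (Suc n))) ^ Suc k * (1 / real (Suc (Suc n))) ^ e)
      \<longlonglongrightarrow> 1 ^ Suc k * 0 ^ e"
    by (intro tendsto_intros)
  ultimately show ?thesis using l by (cases e) auto
qed

section \<open>Chains with kernels \<open>I + G/n + O(n\<^sup>-\<^sup>2)\<close>\<close>

locale stationary_generator =
  fixes G :: "real^'a::finite^'a" and \<mu> :: "real^'a"
  assumes generator: "generator_matrix G"
    and nonzero: "\<And>i j. G $ i $ j \<noteq> 0"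
    and stationary_stochastic: "stochastic_vector \<mu>"
    and stationary: "\<mu> v* G = 0"
begin

lemma stationary_column_sum: "(\<Sum>i\<in>UNIV. \<mu> $ i * G $ i $ j) = 0"
  using arg_cong[OF stationary, of "\<lambda>v. v $ j"]
  by (simp add: vector_matrix_mult_def mult.commute)

abbreviation resolvent_moment :: "('a \<Rightarrow> nat) \<Rightarrow> 'a \<Rightarrow> real" where
  "resolvent_moment \<equiv> limit_end_moment \<mu> (resolvent_kernel G)"

lemma resolvent_moment_generator_eq:
  assumes "total_degree m > 0"
  shows "real (total_degree m) * resolvent_moment m z - (\<Sum>y\<in>UNIV. resolvent_moment m y * G $ y $ z)
       = real (m z) * resolvent_moment (m(z := m z - 1)) z"
  using assms resolvent_inverse(1)[OF generator, of "1 / real (total_degree m)"]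
  by (intro limit_end_moment_generator_eq) (simp_all add: resolvent_kernel_def)

end

locale generator_approx_chain = stationary_generator +
  fixes L :: "nat \<Rightarrow> real^'a^'a" and p :: "real^'a" and C :: real and n0 :: nat
  assumes kernel_stochastic: "\<And>n. stochastic_matrix (L n)"
    and kernel_approx: "\<And>n i j. n \<ge> n0 \<Longrightarrow>
        \<bar>L n $ i $ j - ((if i = j then 1 else 0) + G $ i $ j / real n)\<bar> \<le> C / (real n)\<^sup>2"
    and initial_stochastic: "stochastic_vector p"
begin

lemma kernel_derivative: "(\<lambda>n. real n * (L n $ i $ j - (if i = j then 1 else 0))) \<longlonglongrightarrow> G $ i $ j"
proof -
  define e where "e n = L n $ i $ j - ((if i = j then 1 else 0) + G $ i $ j / real n)" for n
  have "(\<lambda>n. real n * e n) \<longlonglongrightarrow> 0"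
  proof (rule Lim_null_comparison)
    show "eventually (\<lambda>n. norm (real n * e n) \<le> C / real n) sequentially"
      unfolding eventually_sequentially
    proof (intro exI[of _ "max n0 1"] allI impI)
      fix n assume n: "max n0 1 \<le> n"
      then have "real n * \<bar>e n\<bar> \<le> real n * (C / (real n)\<^sup>2)"
        using kernel_approx unfolding e_def by (intro mult_left_mono) auto
      then show "norm (real n * e n) \<le> C / real n" using n by (simp add: abs_mult power2_eq_square)
    qed
    show "(\<lambda>n. C / real n) \<longlonglongrightarrow> 0" by real_asymp
  qed
  then have "(\<lambda>n. G $ i $ j + real n * e n) \<longlonglongrightarrow> G $ i $ j + 0" by (intro tendsto_intros)
  moreover have "eventually (\<lambda>n. G $ i $ j + real n * e n = real n * (L n $ i $ j - (if i = j then 1 else 0)))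
      sequentially"
    using eventually_gt_at_top[of 0] by eventually_elim (simp add: e_def field_simps)
  ultimately show ?thesis by (simp add: Lim_transform_eventually)
qed

lemma kernel_derivative_Suc:
  "(\<lambda>n. real (Suc n) * (L (Suc n) $ i $ j - (if i = j then 1 else 0))) \<longlonglongrightarrow> G $ i $ j"
  using LIMSEQ_Suc[OF kernel_derivative] .

lemma kernel_tendsto_id: "(\<lambda>n. L (Suc n) $ i $ j) \<longlonglongrightarrow> (if i = j then 1 else 0)"
proof -
  have "(\<lambda>n. 1 / real (Suc n)) \<longlonglongrightarrow> 0" by real_asymp
  then have "(\<lambda>n. 1 / real (Suc n) * (real (Suc n) * (L (Suc n) $ i $ j - (if i = j then 1 else 0)))
      + (if i = j then 1 else 0)) \<longlonglongrightarrow> 0 * G $ i $ j + (if i = j then 1 else 0)"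
    by (intro tendsto_intros kernel_derivative_Suc)
  then show ?thesis by simp
qed

lemma tendsto_sum_kernel:
  assumes "\<And>x. (\<lambda>n. f n x) \<longlonglongrightarrow> g x"
  shows "(\<lambda>n. \<Sum>x\<in>UNIV. f n x * L (Suc n) $ x $ y) \<longlonglongrightarrow> g y"
proof -
  have "(\<lambda>n. \<Sum>x\<in>UNIV. f n x * L (Suc n) $ x $ y) \<longlonglongrightarrow> (\<Sum>x\<in>UNIV. g x * (if x = y then 1 else 0))"
    by (intro tendsto_intros assms kernel_tendsto_id)
  then show ?thesis by (simp add: if_distrib cong: if_cong)
qed

definition state_dist :: "nat \<Rightarrow> 'a \<Rightarrow> real" where
  "state_dist n y = end_moment p L n (\<lambda>_. 0) y"

lemma state_dist_Suc: "state_dist (Suc n) y = (\<Sum>x\<in>UNIV. state_dist n x * L (Suc n) $ x $ y)"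
proof -
  have "((\<lambda>_. 0)(y := 0)) = (\<lambda>_::'a. 0::nat)" by auto
  then show ?thesis unfolding state_dist_def end_moment_Suc by simp
qed

lemma sum_state_dist: "(\<Sum>y\<in>UNIV. state_dist n y) = 1"
  using sum_path_prob[OF initial_stochastic kernel_stochastic, where n="Suc n"]
  unfolding state_dist_def end_moment_def sum_lists_group_last by simp

text \<open>Mixing: for \<open>i \<noteq> j\<close> the entry \<open>L (n+1) i j \<approx> G i j / (n+1)\<close> with \<open>G i j > 0\<close>,
  while the diagonal entry tends to \<open>1\<close>.\<close>

lemma kernel_column_lower_bound:
  obtains c N where "0 < c" "c \<le> 1" "\<And>n i. n \<ge> N \<Longrightarrow> L (Suc n) $ i $ j \<ge> c / real (Suc n)"
proof -
  define c where "c = Min (insert 1 ((\<lambda>i. G $ i $ j) ` (UNIV - {j}))) / 2"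
  have G_pos: "G $ i $ j > 0" if "i \<noteq> j" for i
    using generator_off_diagonal_nonneg[OF generator that] nonzero[of i j] by simp
  have c: "0 < c" "c \<le> 1 / 2" unfolding c_def using G_pos by (auto intro: Min_le)
  have c_lt: "c < G $ i $ j" if "i \<noteq> j" for i
  proof -
    have "2 * c \<le> G $ i $ j" unfolding c_def using that by (auto intro: Min_le)
    then show ?thesis using G_pos[OF that] by simp
  qed
  have "eventually (\<lambda>n. \<forall>i. L (Suc n) $ i $ j \<ge> c / real (Suc n)) sequentially"
  proof (rule eventually_all_finite)
    fix i
    show "eventually (\<lambda>n. L (Suc n) $ i $ j \<ge> c / real (Suc n)) sequentially"
    proof (cases "i = j")
      case True
      have "eventually (\<lambda>n. 1 / 2 < L (Suc n) $ i $ j) sequentially"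
        using kernel_tendsto_id[of i j] True by (intro order_tendstoD) auto
      then show ?thesis
      proof (rule eventually_mono)
        fix n assume "1 / 2 < L (Suc n) $ i $ j"
        moreover have "c / real (Suc n) \<le> 1 / 2" using c by (simp add: divide_le_eq)
        ultimately show "c / real (Suc n) \<le> L (Suc n) $ i $ j" by linarith
      qed
    next
      case False
      have "eventually (\<lambda>n. c < real (Suc n) * L (Suc n) $ i $ j) sequentially"
        using kernel_derivative_Suc[of i j] False c_lt[OF False] by (intro order_tendstoD) auto
      then show ?thesis by eventually_elim (simp add: divide_le_eq mult.commute)
    qed
  qed
  then obtain N where "\<And>n i. n \<ge> N \<Longrightarrow> L (Suc n) $ i $ j \<ge> c / real (Suc n)"
    unfolding eventually_sequentially by blast
  with c show ?thesis by (intro that[of c N]) auto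
qed

lemma stationary_defect_tendsto_zero:
  "(\<lambda>n. real (Suc n) * (\<Sum>y\<in>UNIV. \<bar>(\<Sum>x\<in>UNIV. \<mu> $ x * L (Suc n) $ x $ y) - \<mu> $ y\<bar>)) \<longlonglongrightarrow> 0"
proof -
  have "(\<Sum>x\<in>UNIV. \<mu> $ x * L (Suc n) $ x $ y) - \<mu> $ y
      = (\<Sum>x\<in>UNIV. \<mu> $ x * (L (Suc n) $ x $ y - (if x = y then 1 else 0)))" for n y
    unfolding right_diff_distrib sum_subtractf by (simp add: if_distrib cong: if_cong)
  then have scaled: "real (Suc n) * ((\<Sum>x\<in>UNIV. \<mu> $ x * L (Suc n) $ x $ y) - \<mu> $ y)
      = (\<Sum>x\<in>UNIV. \<mu> $ x * (real (Suc n) * (L (Suc n) $ x $ y - (if x = y then 1 else 0))))" for n y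
    by (simp add: sum_distrib_left mult.left_commute)
  have "real (Suc n) * (\<Sum>y\<in>UNIV. \<bar>(\<Sum>x\<in>UNIV. \<mu> $ x * L (Suc n) $ x $ y) - \<mu> $ y\<bar>)
      = (\<Sum>y\<in>UNIV. \<bar>\<Sum>x\<in>UNIV. \<mu> $ x * (real (Suc n) * (L (Suc n) $ x $ y - (if x = y then 1 else 0)))\<bar>)" for n
    unfolding sum_distrib_left by (intro sum.cong refl) (simp only: scaled[symmetric] abs_mult abs_of_nat)
  moreover have "(\<lambda>n. \<Sum>y\<in>UNIV. \<bar>\<Sum>x\<in>UNIV. \<mu> $ x * (real (Suc n) * (L (Suc n) $ x $ y - (if x = y then 1 else 0)))\<bar>)
      \<longlonglongrightarrow> (\<Sum>y\<in>UNIV. \<bar>\<Sum>x\<in>UNIV. \<mu> $ x * G $ x $ y\<bar>)"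
    by (intro tendsto_intros kernel_derivative_Suc)
  ultimately show ?thesis by (simp only: stationary_column_sum abs_zero sum.neutral_const)
qed

text \<open>The deviation from \<open>\<mu>\<close> has mass zero, so Doeblin's bound feeds the Chung-type lemma.\<close>

lemma state_dist_tendsto_stationary: "(\<lambda>n. state_dist n y) \<longlonglongrightarrow> \<mu> $ y"
proof -
  obtain j0 :: 'a where True by simp
  obtain c N where c: "0 < c" "c \<le> 1"
    and column: "\<And>n i. n \<ge> N \<Longrightarrow> L (Suc n) $ i $ j0 \<ge> c / real (Suc n)"
    using kernel_column_lower_bound[where j=j0] by blast
  define z where "z n y = state_dist n y - \<mu> $ y" for n y
  define a where "a n = (\<Sum>y\<in>UNIV. \<bar>z n y\<bar>)" for n
  define b where "b n = (\<Sum>y\<in>UNIV. \<bar>(\<Sum>x\<in>UNIV. \<mu> $ x * L (Suc n) $ x $ y) - \<mu> $ y\<bar>)" for n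
  have zero_mass: "(\<Sum>y\<in>UNIV. z n y) = 0" for n
    unfolding z_def by (simp add: sum_subtractf sum_state_dist stochastic_vectorD(2)[OF stationary_stochastic])
  have z_Suc: "z (Suc n) y = (\<Sum>x\<in>UNIV. z n x * L (Suc n) $ x $ y)
      + ((\<Sum>x\<in>UNIV. \<mu> $ x * L (Suc n) $ x $ y) - \<mu> $ y)" for n y
    unfolding z_def state_dist_Suc by (simp add: left_diff_distrib sum_subtractf)
  have recursion: "a (Suc n) \<le> (1 - c / real (Suc n)) * a n + b n" if "n \<ge> N" for n
  proof -
    have "a (Suc n) \<le> (\<Sum>y\<in>UNIV. \<bar>\<Sum>x\<in>UNIV. z n x * L (Suc n) $ x $ y\<bar>) + b n"
      unfolding a_def b_def z_Suc sum.distrib[symmetric] by (intro sum_mono abs_triangle_ineq)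
    also have "(\<Sum>y\<in>UNIV. \<bar>\<Sum>x\<in>UNIV. z n x * L (Suc n) $ x $ y\<bar>) \<le> (1 - c / real (Suc n)) * a n"
      unfolding a_def using column[OF that]
      by (intro l1_contraction_stochastic zero_mass stochastic_matrixD[OF kernel_stochastic])
    finally show ?thesis by simp
  qed
  have "(\<lambda>n. real (Suc n) * b n) \<longlonglongrightarrow> 0"
    unfolding b_def by (rule stationary_defect_tendsto_zero)
  then have "a \<longlonglongrightarrow> 0"
    by (intro contracting_recursion_tendsto_zero[where c=c, OF _ c recursion]) (simp_all add: a_def sum_nonneg)
  then have "(\<lambda>n. z n y) \<longlonglongrightarrow> 0"
  proof (rule Lim_null_comparison[rotated])
    show "eventually (\<lambda>n. norm (z n y) \<le> a n) sequentially"
      unfolding a_def by (intro always_eventually allI) (auto intro: member_le_sum)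
  qed
  then show ?thesis unfolding z_def by (rule LIM_zero_cancel)
qed

end

context generator_approx_chain
begin

definition normalised_end_moment :: "nat \<Rightarrow> ('a \<Rightarrow> nat) \<Rightarrow> 'a \<Rightarrow> real" where
  "normalised_end_moment n m y = end_moment p L n m y / real (Suc n) ^ total_degree m"

definition lower_order_term :: "('a \<Rightarrow> nat) \<Rightarrow> nat \<Rightarrow> 'a \<Rightarrow> real" where
  "lower_order_term m n y = (\<Sum>r<m y. real (m y choose r) *
      (real (Suc n) ^ total_degree (m(y := r)) / real (Suc (Suc n)) ^ total_degree m) *
      (\<Sum>x\<in>UNIV. normalised_end_moment n (m(y := r)) x * L (Suc n) $ x $ y))"

lemma normalised_end_moment_0: "total_degree m = 0 \<Longrightarrow> normalised_end_moment n m y = state_dist n y"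
proof -
  assume "total_degree m = 0"
  then have "m = (\<lambda>_. 0)" unfolding total_degree_def by auto
  then show ?thesis unfolding normalised_end_moment_def state_dist_def by (simp add: total_degree_def)
qed

lemma normalised_end_moment_Suc:
  "normalised_end_moment (Suc n) m y
     = (real (Suc n) / real (Suc (Suc n))) ^ total_degree m * (\<Sum>x\<in>UNIV. normalised_end_moment n m x * L (Suc n) $ x $ y)
       + lower_order_term m n y"
proof -
  define T where "T r = real (m y choose r) *
      (real (Suc n) ^ total_degree (m(y := r)) / real (Suc (Suc n)) ^ total_degree m) *
      (\<Sum>x\<in>UNIV. normalised_end_moment n (m(y := r)) x * L (Suc n) $ x $ y)" for r
  have "real (m y choose r) * (\<Sum>x\<in>UNIV. end_moment p L n (m(y := r)) x * L (Suc n) $ x $ y)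
      / real (Suc (Suc n)) ^ total_degree m = T r" for r
  proof -
    have "(\<Sum>x\<in>UNIV. end_moment p L n (m(y := r)) x * L (Suc n) $ x $ y)
        = real (Suc n) ^ total_degree (m(y := r)) * (\<Sum>x\<in>UNIV. normalised_end_moment n (m(y := r)) x * L (Suc n) $ x $ y)"
      unfolding normalised_end_moment_def sum_distrib_left by (intro sum.cong refl) simp
    then show ?thesis unfolding T_def by simp
  qed
  then have "normalised_end_moment (Suc n) m y = (\<Sum>r\<le>m y. T r)"
    unfolding normalised_end_moment_def end_moment_Suc sum_divide_distrib by simp
  also have "\<dots> = (\<Sum>r<m y. T r) + T (m y)"
    by (simp add: lessThan_Suc_atMost[symmetric])
  finally show ?thesis unfolding lower_order_term_def T_def by (simp add: power_divide)
qed

lemma lower_order_term_tendsto: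
  assumes IH: "\<And>m' x. total_degree m' < total_degree m \<Longrightarrow>
      (\<lambda>n. normalised_end_moment n m' x) \<longlonglongrightarrow> resolvent_moment m' x"
  shows "(\<lambda>n. real (Suc n) * lower_order_term m n y) \<longlonglongrightarrow> real (m y) * resolvent_moment (m(y := m y - 1)) y"
proof -
  let ?N = "total_degree m"
  have lower: "total_degree (m(y := r)) < ?N" if "r < m y" for r
    using total_degree_update[of m y r] that by simp
  have "(\<lambda>n. \<Sum>r<m y. real (m y choose r) *
        (real (Suc n) * real (Suc n) ^ total_degree (m(y := r)) / real (Suc (Suc n)) ^ ?N) *
        (\<Sum>x\<in>UNIV. normalised_end_moment n (m(y := r)) x * L (Suc n) $ x $ y))
      \<longlonglongrightarrow> (\<Sum>r<m y. real (m y choose r) * (if ?N = Suc (total_degree (m(y := r))) then 1 else 0) *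
        resolvent_moment (m(y := r)) y)"
    by (intro tendsto_intros tendsto_scaled_power_quotient tendsto_sum_kernel IH lower) simp_all
  moreover have "(\<Sum>r<m y. real (m y choose r) * (if ?N = Suc (total_degree (m(y := r))) then 1 else 0) *
        resolvent_moment (m(y := r)) y) = real (m y) * resolvent_moment (m(y := m y - 1)) y"
  proof (cases "m y")
    case (Suc k)
    have "?N = Suc (total_degree (m(y := r))) \<longleftrightarrow> r = k" if "r < m y" for r
      using total_degree_update[of m y r] Suc that by auto
    then have "(\<Sum>r<m y. real (m y choose r) * (if ?N = Suc (total_degree (m(y := r))) then 1 else 0) *
        resolvent_moment (m(y := r)) y) = (\<Sum>r<m y. if r = k then real (m y) * resolvent_moment (m(y := k)) y else 0)"
      using Suc by (intro sum.cong refl) auto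
    then show ?thesis using Suc by simp
  qed simp
  moreover have "real (Suc n) * lower_order_term m n y = (\<Sum>r<m y. real (m y choose r) *
        (real (Suc n) * real (Suc n) ^ total_degree (m(y := r)) / real (Suc (Suc n)) ^ ?N) *
        (\<Sum>x\<in>UNIV. normalised_end_moment n (m(y := r)) x * L (Suc n) $ x $ y))" for n
    unfolding lower_order_term_def by (simp add: sum_distrib_left mult_ac)
  ultimately show ?thesis by simp
qed

text \<open>The error made when the candidate limit is inserted into the recursion for the
  normalised end moments.\<close>

definition moment_defect :: "('a \<Rightarrow> nat) \<Rightarrow> nat \<Rightarrow> 'a \<Rightarrow> real" where
  "moment_defect m n y = (real (Suc n) / real (Suc (Suc n))) ^ total_degree m *
      (\<Sum>x\<in>UNIV. resolvent_moment m x * L (Suc n) $ x $ y) - resolvent_moment m y + lower_order_term m n y"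

lemma moment_defect_tendsto_zero:
  assumes N: "total_degree m > 0"
    and IH: "\<And>m' x. total_degree m' < total_degree m \<Longrightarrow>
      (\<lambda>n. normalised_end_moment n m' x) \<longlonglongrightarrow> resolvent_moment m' x"
  shows "(\<lambda>n. real (Suc n) * moment_defect m n y) \<longlonglongrightarrow> 0"
proof -
  let ?N = "total_degree m" and ?W = "resolvent_moment m"
  define S where "S n = (\<Sum>x\<in>UNIV. ?W x * L (Suc n) $ x $ y)" for n
  have "real (Suc n) * moment_defect m n y
      = real (Suc n) * ((real (Suc n) / real (Suc (Suc n))) ^ ?N - 1) * S n
        + (\<Sum>x\<in>UNIV. ?W x * (real (Suc n) * (L (Suc n) $ x $ y - (if x = y then 1 else 0))))
        + real (Suc n) * lower_order_term m n y" for n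
  proof -
    have "(\<Sum>x\<in>UNIV. ?W x * (real (Suc n) * (L (Suc n) $ x $ y - (if x = y then 1 else 0))))
        = real (Suc n) * (S n - ?W y)"
      unfolding S_def right_diff_distrib sum_subtractf sum_distrib_left
      by (simp add: mult_ac if_distrib cong: if_cong)
    then show ?thesis unfolding moment_defect_def S_def by (simp add: algebra_simps)
  qed
  moreover have "(\<lambda>n. real (Suc n) * ((real (Suc n) / real (Suc (Suc n))) ^ ?N - 1) * S n
        + (\<Sum>x\<in>UNIV. ?W x * (real (Suc n) * (L (Suc n) $ x $ y - (if x = y then 1 else 0))))
        + real (Suc n) * lower_order_term m n y)
      \<longlonglongrightarrow> - real ?N * ?W y + (\<Sum>x\<in>UNIV. ?W x * G $ x $ y) + real (m y) * resolvent_moment (m(y := m y - 1)) y"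
    unfolding S_def
    by (intro tendsto_intros tendsto_scaled_power_ratio tendsto_sum_kernel kernel_derivative_Suc
        lower_order_term_tendsto IH)
  moreover have "- real ?N * ?W y + (\<Sum>x\<in>UNIV. ?W x * G $ x $ y) + real (m y) * resolvent_moment (m(y := m y - 1)) y = 0"
    using resolvent_moment_generator_eq[OF N, of y] by simp
  ultimately show ?thesis by simp
qed

definition moment_error :: "('a \<Rightarrow> nat) \<Rightarrow> nat \<Rightarrow> real" where
  "moment_error m n = (\<Sum>y\<in>UNIV. \<bar>normalised_end_moment n m y - resolvent_moment m y\<bar>)"

lemma moment_error_recursion:
  assumes N: "total_degree m > 0"
  shows "moment_error m (Suc n)
      \<le> (1 - (1 / 2) / real (Suc n)) * moment_error m n + (\<Sum>y\<in>UNIV. \<bar>moment_defect m n y\<bar>)"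
proof -
  define q where "q = real (Suc n) / real (Suc (Suc n))"
  define z where "z y = normalised_end_moment n m y - resolvent_moment m y" for y
  have q: "0 \<le> q" "q ^ total_degree m \<le> 1 - (1 / 2) / real (Suc n)"
  proof -
    show "0 \<le> q" unfolding q_def by simp
    have "q ^ total_degree m \<le> q ^ 1" using N unfolding q_def by (intro power_decreasing) auto
    also have "\<dots> \<le> 1 - (1 / 2) / real (Suc n)" unfolding q_def by (simp add: field_simps)
    finally show "q ^ total_degree m \<le> 1 - (1 / 2) / real (Suc n)" .
  qed
  have error_Suc: "normalised_end_moment (Suc n) m y - resolvent_moment m y
      = q ^ total_degree m * (\<Sum>x\<in>UNIV. z x * L (Suc n) $ x $ y) + moment_defect m n y" for y
    unfolding z_def normalised_end_moment_Suc moment_defect_def q_def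
    by (simp add: left_diff_distrib sum_subtractf algebra_simps)
  have "moment_error m (Suc n) \<le> (\<Sum>y\<in>UNIV. q ^ total_degree m * \<bar>\<Sum>x\<in>UNIV. z x * L (Suc n) $ x $ y\<bar>
      + \<bar>moment_defect m n y\<bar>)"
    unfolding moment_error_def error_Suc
  proof (intro sum_mono)
    fix y
    show "\<bar>q ^ total_degree m * (\<Sum>x\<in>UNIV. z x * L (Suc n) $ x $ y) + moment_defect m n y\<bar>
        \<le> q ^ total_degree m * \<bar>\<Sum>x\<in>UNIV. z x * L (Suc n) $ x $ y\<bar> + \<bar>moment_defect m n y\<bar>"
      using abs_triangle_ineq[of "q ^ total_degree m * (\<Sum>x\<in>UNIV. z x * L (Suc n) $ x $ y)"] q(1)
      by (simp add: abs_mult)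
  qed
  also have "\<dots> = q ^ total_degree m * (\<Sum>y\<in>UNIV. \<bar>\<Sum>x\<in>UNIV. z x * L (Suc n) $ x $ y\<bar>)
      + (\<Sum>y\<in>UNIV. \<bar>moment_defect m n y\<bar>)"
    by (simp add: sum.distrib sum_distrib_left)
  also have "\<dots> \<le> q ^ total_degree m * moment_error m n + (\<Sum>y\<in>UNIV. \<bar>moment_defect m n y\<bar>)"
    unfolding moment_error_def z_def[symmetric] using q(1)
    by (intro add_right_mono mult_left_mono l1_nonexpansive_stochastic
        stochastic_matrixD[OF kernel_stochastic]) auto
  also have "\<dots> \<le> (1 - (1 / 2) / real (Suc n)) * moment_error m n + (\<Sum>y\<in>UNIV. \<bar>moment_defect m n y\<bar>)"
    unfolding moment_error_def by (intro add_right_mono mult_right_mono q(2)) (auto intro: sum_nonneg)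
  finally show ?thesis .
qed

lemma normalised_end_moment_tendsto: "(\<lambda>n. normalised_end_moment n m y) \<longlonglongrightarrow> resolvent_moment m y"
proof (induction "total_degree m" arbitrary: m y rule: less_induct)
  case less
  show ?case
  proof (cases "total_degree m = 0")
    case True
    then show ?thesis
      using state_dist_tendsto_stationary[of y] by (simp add: normalised_end_moment_0 limit_end_moment_0)
  next
    case False
    then have N: "total_degree m > 0" by simp
    have "(\<lambda>n. \<Sum>y\<in>UNIV. \<bar>real (Suc n) * moment_defect m n y\<bar>) \<longlonglongrightarrow> (\<Sum>y\<in>(UNIV::'a set). 0)"
      by (intro tendsto_intros tendsto_rabs_zero moment_defect_tendsto_zero[OF N less(1)])
    then have "(\<lambda>n. real (Suc n) * (\<Sum>y\<in>UNIV. \<bar>moment_defect m n y\<bar>)) \<longlonglongrightarrow> 0"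
      by (simp add: sum_distrib_left abs_mult)
    then have "moment_error m \<longlonglongrightarrow> 0"
      by (intro contracting_recursion_tendsto_zero[where c="1/2" and N=0, OF _ _ _ moment_error_recursion[OF N]])
        (auto simp: moment_error_def intro: sum_nonneg)
    then have "(\<lambda>n. normalised_end_moment n m y - resolvent_moment m y) \<longlonglongrightarrow> 0"
    proof (rule Lim_null_comparison[rotated])
      show "eventually (\<lambda>n. norm (normalised_end_moment n m y - resolvent_moment m y) \<le> moment_error m n) sequentially"
        unfolding moment_error_def by (intro always_eventually allI) (auto intro: member_le_sum)
    qed
    then show ?thesis by (rule LIM_zero_cancel)
  qed
qed

lemma occ_moment_tendsto: "(\<lambda>n. occ_expect p L n (monomial m)) \<longlonglongrightarrow> (\<Sum>y\<in>UNIV. resolvent_moment m y)"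
proof -
  have "occ_expect p L (Suc n) (monomial m) = (\<Sum>y\<in>UNIV. normalised_end_moment n m y)" for n
    unfolding occ_expect_monomial normalised_end_moment_def by (simp add: sum_divide_distrib)
  moreover have "(\<lambda>n. \<Sum>y\<in>UNIV. normalised_end_moment n m y) \<longlonglongrightarrow> (\<Sum>y\<in>UNIV. resolvent_moment m y)"
    by (intro tendsto_intros normalised_end_moment_tendsto)
  ultimately have "(\<lambda>n. occ_expect p L (Suc n) (monomial m)) \<longlonglongrightarrow> (\<Sum>y\<in>UNIV. resolvent_moment m y)"
    by simp
  then show ?thesis by (rule filterlim_sequentially_Suc[THEN iffD1])
qed

end

section \<open>Occupation moments and convergence in distribution\<close>

lemma occ_in_unit_cube: "occ xs \<in> cbox 0 1"
proof -
  have "real (count_list xs i) / real (length xs) \<le> 1" for i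
    using count_le_length[of xs i] by (cases "length xs = 0") (auto simp: divide_le_eq_1)
  then show ?thesis unfolding occ_def by (auto simp: mem_box_cart)
qed

lemma occ_expect_cong_unit_cube:
  "(\<And>x. x \<in> cbox 0 1 \<Longrightarrow> f x = g x) \<Longrightarrow> occ_expect p L n f = occ_expect p L n g"
  unfolding occ_expect_def using occ_in_unit_cube by (intro sum.cong refl) auto

lemma occ_expect_add: "occ_expect p L n (\<lambda>x. f x + g x) = occ_expect p L n f + occ_expect p L n g"
  unfolding occ_expect_def by (simp add: distrib_left sum.distrib)

lemma occ_expect_scale: "occ_expect p L n (\<lambda>x. c * f x) = c * occ_expect p L n f"
  unfolding occ_expect_def by (simp add: sum_distrib_left mult_ac)

lemma occ_expect_zero: "occ_expect p L n (\<lambda>x. 0) = 0"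
  unfolding occ_expect_def by simp

lemma occ_expect_diff_bound:
  assumes "stochastic_vector p" and "\<And>n. stochastic_matrix (L n)"
    and bound: "\<And>x. x \<in> cbox 0 1 \<Longrightarrow> \<bar>f x - g x\<bar> \<le> e"
  shows "\<bar>occ_expect p L n f - occ_expect p L n g\<bar> \<le> e"
proof -
  have "\<bar>occ_expect p L n f - occ_expect p L n g\<bar>
      \<le> (\<Sum>xs\<in>{xs. length xs = n}. path_prob p L xs * \<bar>f (occ xs) - g (occ xs)\<bar>)"
    unfolding occ_expect_def sum_subtractf[symmetric] right_diff_distrib[symmetric]
    using path_prob_nonneg[OF assms(1,2)] by (intro order.trans[OF sum_abs]) (simp add: abs_mult)
  also have "\<dots> \<le> (\<Sum>xs\<in>{xs. length xs = n}. path_prob p L xs * e)"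
    using path_prob_nonneg[OF assms(1,2)] bound[OF occ_in_unit_cube]
    by (intro sum_mono mult_left_mono) auto
  also have "\<dots> = e" by (simp add: sum_distrib_right[symmetric] sum_path_prob[OF assms(1,2)])
  finally show ?thesis .
qed

lemma continuous_on_monomial: "continuous_on S (monomial m)"
  unfolding monomial_def by (intro continuous_intros)

lemma monomial_unit_cube_bound: "x \<in> cbox 0 1 \<Longrightarrow> \<bar>monomial m x\<bar> \<le> 1"
  unfolding monomial_def by (auto simp: abs_prod mem_box_cart intro!: prod_le_1 power_le_one)

lemma monomial_Suc: "x $ i * monomial m x = monomial (m(i := Suc (m i))) x"
proof -
  have "(\<Prod>j\<in>UNIV - {i}. x $ j ^ (m(i := Suc (m i))) j) = (\<Prod>j\<in>UNIV - {i}. x $ j ^ m j)"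
    by (intro prod.cong) auto
  then show ?thesis unfolding monomial_def by (simp add: prod.remove[of UNIV i])
qed

lemma monomial_0: "monomial (\<lambda>_. 0) x = 1"
  unfolding monomial_def by simp

lemma monomial_single: "monomial (\<lambda>j. if j = i then N else 0) x = x $ i ^ N"
proof -
  have "(\<Prod>j\<in>UNIV - {i}. x $ j ^ (if j = i then N else 0)) = 1" by (intro prod.neutral) auto
  then show ?thesis unfolding monomial_def by (simp add: prod.remove[of UNIV i])
qed

lemma bounded_linear_expansion:
  fixes f :: "real^'a::finite \<Rightarrow> real"
  assumes "bounded_linear f"
  shows "f x = (\<Sum>i\<in>UNIV. x $ i * f (axis i 1))"
proof -
  interpret bounded_linear f by (rule assms)
  have "f x = f (\<Sum>i\<in>UNIV. (x $ i) *\<^sub>R axis i 1)"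
    using basis_expansion[of x] by (simp add: scalar_mult_eq_scaleR)
  also have "\<dots> = (\<Sum>i\<in>UNIV. x $ i * f (axis i 1))" by (simp add: sum scale)
  finally show ?thesis .
qed

lemma measurable_continuous_sets_borel:
  "sets M = sets borel \<Longrightarrow> continuous_on UNIV f \<Longrightarrow> f \<in> borel_measurable M"
  using measurable_cong_sets[OF _ refl] borel_measurable_continuous_onI by blast

context
  fixes \<nu> :: "(real^'a::finite) measure" and p :: "real^'a" and L :: "nat \<Rightarrow> real^'a^'a"
  assumes nu_prob: "prob_space \<nu>" and nu_sets: "sets \<nu> = sets borel"
    and converges: "occ_converges_to p L \<nu>"
begin

lemma AE_unit_cube_if_occ_converges: "AE x in \<nu>. x \<in> cbox 0 1"
proof -
  interpret prob_space \<nu> by (rule nu_prob)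
  define d where "d x = min 1 (infdist x (cbox 0 (1::real^'a)))" for x
  have d_cont: "continuous_on UNIV d" unfolding d_def by (intro continuous_intros)
  have d_bound: "\<bar>d x\<bar> \<le> 1" for x unfolding d_def using infdist_nonneg[of x] by simp
  have "bounded (range d)" unfolding bounded_iff using d_bound by auto
  then have "(\<lambda>n. occ_expect p L n d) \<longlonglongrightarrow> (\<integral>x. d x \<partial>\<nu>)"
    using converges d_cont unfolding occ_converges_to_def by blast
  moreover have "occ_expect p L n d = 0" for n
    unfolding occ_expect_def d_def by (simp add: infdist_zero[OF occ_in_unit_cube])
  ultimately have "(\<integral>x. d x \<partial>\<nu>) = 0" using LIMSEQ_unique[OF _ tendsto_const] by simp
  moreover have "integrable \<nu> d"
    using d_bound by (intro integrable_const_bound[where B=1] measurable_continuous_sets_borel[OF nu_sets d_cont]) auto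
  moreover have "0 \<le> d x" for x unfolding d_def by (simp add: infdist_nonneg)
  ultimately have "AE x in \<nu>. d x = 0" using integral_nonneg_eq_0_iff_AE[of \<nu> d] by simp
  then show ?thesis
  proof (rule AE_mp, intro AE_I2 impI)
    fix x assume "d x = 0"
    then have "infdist x (cbox 0 (1::real^'a)) = 0" unfolding d_def by (simp add: min_def split: if_splits)
    moreover have "(0::real^'a) \<in> cbox 0 1" by (simp add: mem_box_cart)
    ultimately show "x \<in> cbox 0 1" using in_closed_iff_infdist_zero[OF closed_cbox] by blast
  qed
qed

lemma monomial_moment_if_occ_converges:
  "integrable \<nu> (monomial m) \<and> (\<lambda>n. occ_expect p L n (monomial m)) \<longlonglongrightarrow> (\<integral>x. monomial m x \<partial>\<nu>)"
proof -
  interpret prob_space \<nu> by (rule nu_prob)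
  define h where "h x = monomial m (clamp 0 1 x)" for x
  have clamp_cube: "clamp 0 1 x \<in> cbox 0 (1::real^'a)" for x
    by (rule clamp_in_interval) (auto simp: Basis_vec_def inner_axis)
  have h_cont: "continuous_on UNIV h" unfolding h_def by (intro clamp_continuous_on continuous_on_monomial)
  have h_bound: "\<bar>h x\<bar> \<le> 1" for x unfolding h_def by (rule monomial_unit_cube_bound[OF clamp_cube])
  have "bounded (range h)" unfolding bounded_iff using h_bound by auto
  then have "(\<lambda>n. occ_expect p L n h) \<longlonglongrightarrow> (\<integral>x. h x \<partial>\<nu>)"
    using converges h_cont unfolding occ_converges_to_def by blast
  moreover have "occ_expect p L n h = occ_expect p L n (monomial m)" for n
    by (rule occ_expect_cong_unit_cube) (simp add: h_def)
  moreover have "integrable \<nu> h"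
    using h_bound by (intro integrable_const_bound[where B=1] measurable_continuous_sets_borel[OF nu_sets h_cont]) auto
  moreover have "AE x in \<nu>. h x = monomial m x"
    using AE_unit_cube_if_occ_converges by eventually_elim (simp add: h_def)
  note integral_cong_AE[OF measurable_continuous_sets_borel[OF nu_sets h_cont]
      measurable_continuous_sets_borel[OF nu_sets continuous_on_monomial] this]
    integrable_cong_AE[OF measurable_continuous_sets_borel[OF nu_sets h_cont]
      measurable_continuous_sets_borel[OF nu_sets continuous_on_monomial] this]
  ultimately show ?thesis by simp
qed

end

context
  fixes \<nu> :: "(real^'a::finite) measure" and p :: "real^'a" and L :: "nat \<Rightarrow> real^'a^'a"
  assumes nu_prob: "prob_space \<nu>" and nu_sets: "sets \<nu> = sets borel"
    and cube: "AE x in \<nu>. x \<in> cbox 0 1"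
    and moments: "\<And>m. integrable \<nu> (monomial m) \<and>
      (\<lambda>n. occ_expect p L n (monomial m)) \<longlonglongrightarrow> (\<integral>x. monomial m x \<partial>\<nu>)"
    and initial: "stochastic_vector p" and kernels: "\<And>n. stochastic_matrix (L n)"
begin

definition occ_limit :: "(real^'a \<Rightarrow> real) \<Rightarrow> bool" where
  "occ_limit h \<longleftrightarrow> integrable \<nu> h \<and> (\<lambda>n. occ_expect p L n h) \<longlonglongrightarrow> (\<integral>x. h x \<partial>\<nu>)"

definition occ_limit_monomial_multiples :: "(real^'a \<Rightarrow> real) \<Rightarrow> bool" where
  "occ_limit_monomial_multiples g \<longleftrightarrow> (\<forall>m. occ_limit (\<lambda>x. g x * monomial m x))"

lemma occ_limit_add: "occ_limit f \<Longrightarrow> occ_limit g \<Longrightarrow> occ_limit (\<lambda>x. f x + g x)"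
  unfolding occ_limit_def occ_expect_add by (auto intro: tendsto_add)

lemma occ_limit_scale: "occ_limit f \<Longrightarrow> occ_limit (\<lambda>x. c * f x)"
  unfolding occ_limit_def occ_expect_scale by (auto intro: tendsto_mult_left)

lemma occ_limit_sum: "finite I \<Longrightarrow> (\<And>i. i \<in> I \<Longrightarrow> occ_limit (f i)) \<Longrightarrow> occ_limit (\<lambda>x. \<Sum>i\<in>I. f i x)"
proof (induction I rule: finite_induct)
  case empty then show ?case by (simp add: occ_limit_def occ_expect_zero)
next
  case (insert a I) then show ?case by (simp add: occ_limit_add)
qed

text \<open>Induction over polynomials, strengthened to multiples of monomials so that the
  product case reduces to the linear one, where \<open>x\<^sub>i\<close> times a monomial is again a monomial.\<close>

lemma occ_limit_monomial_multiples_mult: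
  assumes "real_polynomial_function f" and "occ_limit_monomial_multiples g"
  shows "occ_limit_monomial_multiples (\<lambda>x. f x * g x)"
  using assms
proof (induction f arbitrary: g rule: real_polynomial_function.induct)
  case (linear f)
  show ?case unfolding occ_limit_monomial_multiples_def
  proof
    fix m
    have "occ_limit (\<lambda>x. \<Sum>i\<in>UNIV. f (axis i 1) * (g x * monomial (m(i := Suc (m i))) x))"
      using linear.prems unfolding occ_limit_monomial_multiples_def
      by (intro occ_limit_sum occ_limit_scale) auto
    moreover have "(\<Sum>i\<in>UNIV. f (axis i 1) * (g x * monomial (m(i := Suc (m i))) x)) = f x * g x * monomial m x" for x
      unfolding monomial_Suc[symmetric] bounded_linear_expansion[OF linear.hyps, of x] sum_distrib_right
      by (intro sum.cong) auto
    ultimately show "occ_limit (\<lambda>x. f x * g x * monomial m x)" by simp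
  qed
next
  case (const c)
  then show ?case
    unfolding occ_limit_monomial_multiples_def using occ_limit_scale[of _ c] by (simp add: mult.assoc)
next
  case (add f1 f2)
  then have "occ_limit_monomial_multiples (\<lambda>x. f1 x * g x)" "occ_limit_monomial_multiples (\<lambda>x. f2 x * g x)"
    by blast+
  then show ?case
    unfolding occ_limit_monomial_multiples_def by (simp only: distrib_right occ_limit_add simp_thms)
next
  case (mult f1 f2)
  then have "occ_limit_monomial_multiples (\<lambda>x. f1 x * (f2 x * g x))" by blast
  then show ?case by (simp add: mult.assoc)
qed

lemma occ_limit_polynomial:
  assumes "polynomial_function g"
  shows "occ_limit g"
proof -
  have "occ_limit_monomial_multiples (\<lambda>x. 1)"
    unfolding occ_limit_monomial_multiples_def occ_limit_def using moments by simp
  then have "occ_limit_monomial_multiples (\<lambda>x. g x * 1)"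
    using assms real_polynomial_function_eq occ_limit_monomial_multiples_mult by blast
  then have "occ_limit (\<lambda>x. g x * 1 * monomial (\<lambda>_. 0) x)"
    unfolding occ_limit_monomial_multiples_def by blast
  then show ?thesis by (simp add: monomial_0)
qed

text \<open>Stone--Weierstrass on the unit cube, which carries both \<open>\<nu>\<close> and all occupation vectors.\<close>

lemma occ_converges_if_moments_converge: "occ_converges_to p L \<nu>"
  unfolding occ_converges_to_def
proof (intro allI impI)
  fix f :: "real^'a \<Rightarrow> real"
  assume f_cont: "continuous_on UNIV f" and "bounded (range f)"
  interpret prob_space \<nu> by (rule nu_prob)
  obtain B where "\<And>x. \<bar>f x\<bar> \<le> B" using \<open>bounded (range f)\<close> unfolding bounded_iff by auto
  then have f_int: "integrable \<nu> f"
    by (intro integrable_const_bound[where B=B] measurable_continuous_sets_borel[OF nu_sets f_cont]) auto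
  show "(\<lambda>n. occ_expect p L n f) \<longlonglongrightarrow> (\<integral>x. f x \<partial>\<nu>)"
  proof (rule LIMSEQ_I)
    fix r :: real assume r: "r > 0"
    define e where "e = r / 4"
    have e: "e > 0" using r unfolding e_def by simp
    obtain g where g: "polynomial_function g" "\<forall>x\<in>cbox 0 1. norm (f x - g x) < e"
      using Stone_Weierstrass_polynomial_function[OF compact_cbox continuous_on_subset[OF f_cont subset_UNIV] e]
      by blast
    have g_close: "\<And>x. x \<in> cbox 0 1 \<Longrightarrow> \<bar>f x - g x\<bar> \<le> e" using g(2) by (auto intro: less_imp_le)
    have g_int: "integrable \<nu> g" and g_lim: "(\<lambda>n. occ_expect p L n g) \<longlonglongrightarrow> (\<integral>x. g x \<partial>\<nu>)"
      using occ_limit_polynomial[OF g(1)] unfolding occ_limit_def by auto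
    obtain N where N: "\<And>n. n \<ge> N \<Longrightarrow> \<bar>occ_expect p L n g - (\<integral>x. g x \<partial>\<nu>)\<bar> < e"
      using LIMSEQ_D[OF g_lim e] by auto
    have "AE x in \<nu>. \<bar>f x - g x\<bar> \<le> e" using cube by eventually_elim (rule g_close)
    then have "\<bar>\<integral>x. f x - g x \<partial>\<nu>\<bar> \<le> e"
      using integral_abs_bound[of \<nu> "\<lambda>x. f x - g x"] integral_mono_AE[of \<nu> "\<lambda>x. \<bar>f x - g x\<bar>" "\<lambda>_. e"]
        f_int g_int prob_space by simp
    then have integral_close: "\<bar>(\<integral>x. f x \<partial>\<nu>) - (\<integral>x. g x \<partial>\<nu>)\<bar> \<le> e"
      using f_int g_int by simp
    show "\<exists>N. \<forall>n\<ge>N. norm (occ_expect p L n f - (\<integral>x. f x \<partial>\<nu>)) < r"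
    proof (intro exI allI impI)
      fix n assume "n \<ge> N"
      then have "\<bar>occ_expect p L n g - (\<integral>x. g x \<partial>\<nu>)\<bar> < e" by (rule N)
      moreover have "\<bar>occ_expect p L n f - occ_expect p L n g\<bar> \<le> e"
        by (rule occ_expect_diff_bound[OF initial kernels g_close])
      ultimately have "\<bar>occ_expect p L n f - (\<integral>x. f x \<partial>\<nu>)\<bar> < 3 * e"
        using integral_close by linarith
      then show "norm (occ_expect p L n f - (\<integral>x. f x \<partial>\<nu>)) < r"
        unfolding e_def using r by simp
    qed
  qed
qed

end

section \<open>Identification of the limit law\<close>

context stationary_generator
begin

lemma Euler_approx_chain:
  assumes "\<forall>n>M. \<forall>i j. (mat 1 + (1 / real n) *\<^sub>R G) $ i $ j \<ge> 0" and "stochastic_vector p"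
  shows "generator_approx_chain G \<mu> (Euler_kernel G M) p 0 (Suc M)"
proof (intro generator_approx_chain.intro stationary_generator_axioms generator_approx_chain_axioms.intro)
  show "stochastic_matrix (Euler_kernel G M n)" for n
    by (rule stochastic_matrix_Euler_kernel[OF generator assms(1)])
  show "\<bar>Euler_kernel G M n $ i $ j - ((if i = j then 1 else 0) + G $ i $ j / real n)\<bar> \<le> 0 / (real n)\<^sup>2"
    if "Suc M \<le> n" for n i j
    using that by (simp add: Euler_kernel_component)
qed (rule assms(2))

lemma resolvent_approx_chain:
  "generator_approx_chain G \<mu> (resolvent_kernel G) \<mu> (\<Sum>k\<in>UNIV. \<Sum>l\<in>UNIV. \<bar>(G ** G) $ k $ l\<bar>) 0"
  by (intro generator_approx_chain.intro stationary_generator_axioms generator_approx_chain_axioms.intro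
      stochastic_matrix_resolvent_kernel[OF generator] resolvent_kernel_approx[OF generator]
      stationary_stochastic)

end

context generator_approx_chain
begin

lemma moments_of_limit_law:
  assumes "prob_space \<nu>" and "sets \<nu> = sets borel" and "occ_converges_to p L \<nu>"
  shows "integrable \<nu> (monomial m) \<and> (\<integral>x. monomial m x \<partial>\<nu>) = (\<Sum>y\<in>UNIV. resolvent_moment m y)"
  using monomial_moment_if_occ_converges[OF assms] occ_moment_tendsto LIMSEQ_unique by blast

text \<open>The moments of the limit law depend on \<open>G\<close> and \<open>\<mu>\<close> only; since the resolvent chain
  started in \<open>\<mu>\<close> is itself a chain of this kind, its occupation moments have the same limits.\<close>

lemma resolvent_chain_occ_converges:
  assumes "prob_space \<nu>" and "sets \<nu> = sets borel" and "occ_converges_to p L \<nu>"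
  shows "occ_converges_to \<mu> (resolvent_kernel G) \<nu>"
proof -
  interpret Z: generator_approx_chain G \<mu> "resolvent_kernel G" \<mu> "\<Sum>k\<in>UNIV. \<Sum>l\<in>UNIV. \<bar>(G ** G) $ k $ l\<bar>" 0
    by (rule resolvent_approx_chain)
  show ?thesis
  proof (rule occ_converges_if_moments_converge[OF assms(1,2)])
    show "AE x in \<nu>. x \<in> cbox 0 1" by (rule AE_unit_cube_if_occ_converges[OF assms])
    show "integrable \<nu> (monomial m) \<and>
        (\<lambda>n. occ_expect \<mu> (resolvent_kernel G) n (monomial m)) \<longlonglongrightarrow> (\<integral>x. monomial m x \<partial>\<nu>)" for m
      using moments_of_limit_law[OF assms, of m] Z.occ_moment_tendsto[of m] by simp
  qed (use stationary_stochastic stochastic_matrix_resolvent_kernel[OF generator] in auto)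
qed

end

theorem mainTheorem8:
  fixes G :: "real^'a^'a" and \<mu> :: "real^'a" and M :: nat
    and K Kt :: "nat \<Rightarrow> real^'a^'a" and \<pi> :: "real^'a" and \<nu> :: "(real^'a) measure"
  assumes gen: "generator_matrix G"
    and nonzero: "\<forall>i j. G $ i $ j \<noteq> 0"
    and mu_stoch: "stochastic_vector \<mu>"
    and mu_inv: "\<mu> v* G = 0"
    and M_def: "\<forall>n>M. \<forall>i j. (mat 1 + (1 / real n) *\<^sub>R G) $ i $ j \<ge> 0"
    and K_def: "\<forall>n. K n = (if n > M then mat 1 + (1 / real n) *\<^sub>R G else mat 1)"
    and Kt_def: "\<forall>n. Kt n = matrix_inv (mat 1 - (1 / real n) *\<^sub>R G)"
    and pi_stoch: "stochastic_vector \<pi>"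
    and nu_prob: "prob_space \<nu>" and nu_sets: "sets \<nu> = sets borel"
    and nu_lim: "occ_converges_to \<pi> K \<nu>"
  shows "(\<forall>i j. (\<lambda>n. Kt n $ i $ j - K n $ i $ j) \<in> O(\<lambda>n. 1 / (real n)^2))
    \<and> occ_converges_to \<mu> Kt \<nu>
    \<and> (\<forall>m :: 'a \<Rightarrow> nat. (\<Sum>i\<in>UNIV. m i) > 0 \<longrightarrow>
          (\<integral>x. (\<Prod>i\<in>UNIV. (x $ i) ^ m i) \<partial>\<nu>) =
          (\<Prod>i\<in>UNIV. fact (m i)) / fact (\<Sum>i\<in>UNIV. m i) *
          (\<Sum>xs\<in>{xs. length xs = (\<Sum>i\<in>UNIV. m i) \<and> (\<forall>i. count_list xs i = m i)}.
              path_prob \<mu> Kt xs))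
    \<and> (\<forall>i (N::nat). N > 0 \<longrightarrow> (\<integral>x. (x $ i) ^ N \<partial>\<nu>) = path_prob \<mu> Kt (replicate N i))"
proof -
  interpret stationary_generator G \<mu> using gen nonzero mu_stoch mu_inv by unfold_locales auto
  have Kt: "Kt = resolvent_kernel G" using Kt_def by (auto simp: resolvent_kernel_def resolvent_def)
  have K: "K = Euler_kernel G M" using K_def by (auto simp: Euler_kernel_def)
  interpret T: generator_approx_chain G \<mu> K \<pi> 0 "Suc M"
    unfolding K by (rule Euler_approx_chain[OF M_def pi_stoch])
  have moments: "(\<integral>x. monomial m x \<partial>\<nu>)
      = (\<Prod>i\<in>UNIV. fact (m i)) / fact (total_degree m) * (\<Sum>xs\<in>lists_with_counts m. path_prob \<mu> Kt xs)"
    if "total_degree m > 0" for m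
    using T.moments_of_limit_law[OF nu_prob nu_sets nu_lim, of m]
      sum_limit_end_moment[OF stochastic_matrix_resolvent_kernel[OF gen] that]
    unfolding Kt by simp
  show ?thesis
  proof (intro conjI allI impI)
    show "(\<lambda>n. Kt n $ i $ j - K n $ i $ j) \<in> O(\<lambda>n. 1 / (real n)^2)" for i j
      unfolding Kt K by (rule resolvent_kernel_minus_Euler_kernel_bigo[OF gen])
    show "occ_converges_to \<mu> Kt \<nu>"
      unfolding Kt by (rule T.resolvent_chain_occ_converges[OF nu_prob nu_sets nu_lim])
    show "(\<integral>x. (\<Prod>i\<in>UNIV. (x $ i) ^ m i) \<partial>\<nu>) = (\<Prod>i\<in>UNIV. fact (m i)) / fact (\<Sum>i\<in>UNIV. m i) *
        (\<Sum>xs\<in>{xs. length xs = (\<Sum>i\<in>UNIV. m i) \<and> (\<forall>i. count_list xs i = m i)}. path_prob \<mu> Kt xs)"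
      if "(\<Sum>i\<in>UNIV. m i) > 0" for m
      using moments[of m] that unfolding monomial_def total_degree_def lists_with_counts_def by simp
    show "(\<integral>x. (x $ i) ^ N \<partial>\<nu>) = path_prob \<mu> Kt (replicate N i)" if "N > 0" for i N
      using moments[of "\<lambda>j. if j = i then N else 0"] that
      by (simp add: monomial_single lists_with_counts_single total_degree_single prod_fact_single)
  qed
qed

end
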